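(* Assume $a^2\rho(\mathbf P_1\mathbf E)<1$. Then for every reception index $j\in\mathbb N_0$ and every $D\in\mathbb N$ the performance-evaluation function is finite and equals $$\mathcal J_{S_j}^D=\tilde g_D(\bar a^2,\gamma_{S_j})\,x_{S_j}^2+\bar M\big[\tilde g_D(a^2,\gamma_{S_j})-\tilde g_D(1,\gamma_{S_j})\big]-\Big[B\tilde f_D(1,\gamma_{S_j})+x_{S_j}^2\big(\tilde g_D(c^2,\gamma_{S_j})-\tilde f_D(c^2,\gamma_{S_j})\big)\Big],$$ where $$\tilde g_D(b,\gamma):=b^D\,\mathbf d^T(\mathbf I-b\mathbf P_1\mathbf E)^{-1}\mathbf P_0^{D-1}\mathbf P_1\boldsymbol\delta_\gamma,\qquad \tilde f_D(b,\gamma):=b^{\nu}\,\mathbf d^T(\mathbf P_1\mathbf E)^{\nu-D}(\mathbf I-b\mathbf P_1\mathbf E)^{-1}\mathbf P_0^{D-1}\mathbf P_1\boldsymbol\delta_\gamma,$$ and $\nu:=\max\{D,\lceil \log(x_{S_j}^2/B)/\log(1/c^2)\rceil\}$ (with $\nu:=D$ if $x_{S_j}=0$).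
   Context: Setup. Fix reals $a,L$ with $|a|>1$ and $\bar a:=a+L$ satisfying $0<\bar a^2<1$; fix $c$ with $\bar a^2<c^2<1$, $M>0$, $B>0$, and put $\bar M:=M/(a^2-1)$. Plant: $x_{k+1}=ax_k+u_k+v_k$, $k\in\mathbb N_0$, where $v_k$ are i.i.d. real random variables with mean $0$ and variance $M$, independent of everything else. At each time the sensor chooses $t_k\in\{0,1\}$; $r_k\in\{0,1\}$ is the reception indicator ($r_k=0$ whenever $t_k=0$). Controller: $u_k=L\hat x_k^+$, with $\hat x_k:=\bar a\hat x_{k-1}^+$, $\hat x_k^+:=x_k$ if $r_k=1$ and $\hat x_k^+:=\hat x_k$ if $r_k=0$; $z_k:=x_k-\hat x_k$, $z_k^+:=x_k-\hat x_k^+$. Channel: state $\gamma_k\in\{1,\dots,n\}$; given $\gamma_k=j$ and $t_k=\ell\in\{0,1\}$, $\gamma_{k+1}=i$ with probability $(\mathbf P_\ell)_{ij}$, where $\mathbf P_0,\mathbf P_1$ are column-stochastic. Drop probabilities $\mathbf e\in[0,1]^n$: if $t_k=1$ then $r_k=1$ with probability $1-e_{\gamma_k}$, else $r_k=0$. $\mathbf E:=\mathrm{diag}(\mathbf e)$, $\mathbf d:=\mathbf 1-\mathbf e$; $\rho(\cdot)$ spectral radius, $\boldsymbol\delta_i$ standard basis vector, $\mathbf P^0:=\mathbf I$. Convention $r_0=1$; $R_k:=\max\{i<k:r_i=1\}$, $R_k^+:=\max\{i\le k:r_i=1\}$; $S_0:=0$, $S_{j+1}:=\min\{k>S_j:r_k=1\}$.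 After a reception at time $k$ the sensor learns $\gamma_k$. Post-transmission information: $I_k^+:=\{k,x_k,z_k^+,R_k^+,x_{R_k^+},\mathbf p_k^+,t_k,r_k\gamma_k\}$ where $\mathbf p_k^+=\boldsymbol\delta_{\gamma_k}$ if $r_k=1$. Performance function $h_k:=x_k^2-\max\{c^{2(k-R_k)}x_{R_k}^2,B\}$. Nominal policy $\mathcal T_k^D$: $t_i=0$ for $i\in\{k,\dots,k+D-1\}$ and $t_i=1$ for $i\ge k+D$. Performance-evaluation function: $\mathcal J_{S_j}^D:=\mathbb E_{\mathcal T^{D-1}_{S_j+1}}[h_{S_{j+1}}\mid I_{S_j}^+]$ (transmission took place and succeeded at $S_j$; then the nominal policy $\mathcal T^{D-1}_{S_j+1}$ is used). Under this policy the probability that $S_{j+1}=S_j+w$ ($w\ge D$) given $\gamma_{S_j}=\gamma$ is $\tilde\Omega_D(w,\gamma)=\mathbf d^T(\mathbf P_1\mathbf E)^{w-D}\mathbf P_0^{D-1}\mathbf P_1\boldsymbol\delta_\gamma$. *)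

theory Defs
  imports "HOL-Analysis.Analysis" "HOL-Probability.Probability"
begin

fun mpow :: "real^'n^'n \<Rightarrow> nat \<Rightarrow> real^'n^'n" where
  "mpow A 0 = mat 1"
| "mpow A (Suc k) = A ** mpow A k"

definition cplx_mat :: "real^'n^'n \<Rightarrow> complex^'n^'n" where
  "cplx_mat A = (\<chi> i j. complex_of_real (A $ i $ j))"

definition spec_radius :: "real^'n^'n \<Rightarrow> real" where
  "spec_radius A = Max (norm ` {z. \<exists>w::complex^'n. w \<noteq> 0 \<and> cplx_mat A *v w = z *s w})"

definition col_stochastic :: "real^'n^'n \<Rightarrow> bool" where
  "col_stochastic P \<longleftrightarrow> (\<forall>i j. 0 \<le> P $ i $ j) \<and> (\<forall>j. (\<Sum>i\<in>UNIV. P $ i $ j) = 1)"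

definition diagm :: "real^'n \<Rightarrow> real^'n^'n" where
  "diagm e = (\<chi> i j. if i = j then e $ i else 0)"

definition dvec :: "real^'n \<Rightarrow> real^'n" where
  "dvec e = (\<chi> i. 1 - e $ i)"

definition gt :: "real^'n^'n \<Rightarrow> real^'n^'n \<Rightarrow> real^'n \<Rightarrow> nat \<Rightarrow> real \<Rightarrow> 'n \<Rightarrow> real" where
  "gt P0 P1 e D b g = b ^ D * (dvec e \<bullet>
      (matrix_inv (mat 1 - b *\<^sub>R (P1 ** diagm e)) *v (mpow P0 (D - 1) *v (P1 *v axis g 1))))"

definition nu :: "nat \<Rightarrow> real \<Rightarrow> real \<Rightarrow> real \<Rightarrow> nat" where
  "nu D B c x = (if x = 0 then D
                 else nat (max (int D) \<lceil>ln (x\<^sup>2 / B) / ln (1 / c\<^sup>2)\<rceil>))"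

definition ft :: "real^'n^'n \<Rightarrow> real^'n^'n \<Rightarrow> real^'n \<Rightarrow> nat \<Rightarrow> nat \<Rightarrow> real \<Rightarrow> 'n \<Rightarrow> real" where
  "ft P0 P1 e D \<nu> b g = b ^ \<nu> * (dvec e \<bullet>
      (mpow (P1 ** diagm e) (\<nu> - D) *v
        (matrix_inv (mat 1 - b *\<^sub>R (P1 ** diagm e)) *v (mpow P0 (D - 1) *v (P1 *v axis g 1)))))"

section \<open>One inter-reception cycle, time shifted so that S_j = 0\<close>

text \<open>Nominal policy T^{D-1}_{S_j+1} in shifted time: t_0 = 1 (the successful transmission
  at S_j), t_k = 0 for 1 \<le> k \<le> D-1, t_k = 1 for k \<ge> D.\<close>
definition tpol :: "nat \<Rightarrow> nat \<Rightarrow> bool" where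
  "tpol D k \<longleftrightarrow> k = 0 \<or> D \<le> k"

text \<open>Probability of a channel-path cylinder: gamma_0..gamma_m = gs 0..gs m and
  r_1..r_m = rs 1..rs m, given gamma_0 = g0.  Entry (P)_{ij} is P $ i $ j
  (i = next state, j = current state).\<close>
definition chan_prob :: "real^'n^'n \<Rightarrow> real^'n^'n \<Rightarrow> real^'n \<Rightarrow> nat \<Rightarrow> 'n
    \<Rightarrow> nat \<Rightarrow> (nat \<Rightarrow> 'n) \<Rightarrow> (nat \<Rightarrow> bool) \<Rightarrow> real" where
  "chan_prob P0 P1 e D g0 m gs rs =
     (if gs 0 = g0 then 1 else 0) *
     (\<Prod>k<m. (if tpol D k then P1 else P0) $ gs (Suc k) $ gs k *
        (if tpol D (Suc k)
         then (if rs (Suc k) then 1 - e $ gs (Suc k) else e $ gs (Suc k))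
         else (if rs (Suc k) then 0 else 1)))"

text \<open>Closed loop: returns (x_k, xhat^+_k); x_0 = xhat^+_0 = x0 (reception at time 0).
  x_{k+1} = a x_k + u_k + v_k with u_k = L xhat^+_k; xhat_{k+1} = (a+L) xhat^+_k;
  xhat^+_{k+1} = x_{k+1} if r_{k+1} else xhat_{k+1}.\<close>
fun traj :: "real \<Rightarrow> real \<Rightarrow> real \<Rightarrow> (nat \<Rightarrow> real) \<Rightarrow> (nat \<Rightarrow> bool) \<Rightarrow> nat \<Rightarrow> real \<times> real" where
  "traj a L x0 vs rs 0 = (x0, x0)"
| "traj a L x0 vs rs (Suc k) =
     (let x = fst (traj a L x0 vs rs k); xp = snd (traj a L x0 vs rs k);
          x' = a * x + L * xp + vs k
      in (x', if rs (Suc k) then x' else (a + L) * xp))"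

text \<open>R_k = max{i<k. r_i = 1}, with the convention that time 0 (= S_j) is a reception.\<close>
definition lastrec :: "(nat \<Rightarrow> bool) \<Rightarrow> nat \<Rightarrow> nat" where
  "lastrec rs k = Max {i. i < k \<and> (i = 0 \<or> rs i)}"

definition hperf :: "real \<Rightarrow> real \<Rightarrow> real \<Rightarrow> real \<Rightarrow> real \<Rightarrow> (nat \<Rightarrow> real) \<Rightarrow> (nat \<Rightarrow> bool)
    \<Rightarrow> nat \<Rightarrow> real" where
  "hperf a L c B x0 vs rs k =
     (fst (traj a L x0 vs rs k))\<^sup>2
     - max (c ^ (2 * (k - lastrec rs k)) * (fst (traj a L x0 vs rs (lastrec rs k)))\<^sup>2) B"

definition next_rec :: "(nat \<Rightarrow> bool) \<Rightarrow> nat" where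
  "next_rec rs = (LEAST k. 0 < k \<and> rs k)"

end

theory Submission
  imports Defs "Jordan_Normal_Form.Spectral_Radius"
begin

text \<open>
  Between receptions the loop runs open: if the next reception occurs at time \<open>w\<close>, then
  \<open>R\<^sub>w = 0\<close> and \<open>x\<^sub>w = (a + L)\<^sup>w x\<^sub>0 + \<Sum>\<^sub>i\<^sub><\<^sub>w a\<^sup>w\<^sup>-\<^sup>1\<^sup>-\<^sup>i v\<^sub>i\<close>, so the cost at the next reception
  depends only on \<open>w\<close> and the noise. As noise and channel are independent, the expected cost
  is \<open>\<Sum>\<^sub>w \<Omega>(w) E[h\<^sub>w]\<close> with \<open>E[h\<^sub>w] = (a + L)\<^sup>2\<^sup>w x\<^sub>0\<^sup>2 + M(a\<^sup>2\<^sup>w - 1)/(a\<^sup>2 - 1) - max(c\<^sup>2\<^sup>w x\<^sub>0\<^sup>2, B)\<close>,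
  where the maximum equals \<open>B\<close> exactly from \<open>w = \<nu>\<close> on. Every resulting series is a Neumann
  series \<open>\<Sum>\<^sub>k b\<^sup>k d\<^sup>T(P\<^sub>1E)\<^sup>k u = d\<^sup>T(I - bP\<^sub>1E)\<^sup>-\<^sup>1u\<close>, convergent for \<open>0 \<le> b \<le> a\<^sup>2\<close> because
  \<open>a\<^sup>2\<rho>(P\<^sub>1E) < 1\<close>. At \<open>b = 1\<close> it sums to 1, so a next reception occurs almost surely, and
  \<open>E|h\<^sub>w| = O(a\<^sup>2\<^sup>w)\<close> justifies exchanging expectation and summation.
\<close>

section \<open>Spectral radius and decay of matrix powers\<close>

text \<open>The spectral radius bound of the Jordan normal form library is transferred to
  Cartesian matrices through an enumeration of the index type.\<close>

definition from_idx :: "nat \<Rightarrow> 'n::finite" where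
  "from_idx = (SOME h. bij_betw h {..<CARD('n)} (UNIV::'n set))"

lemma bij_betw_from_idx: "bij_betw (from_idx::nat\<Rightarrow>'n::finite) {..<CARD('n)} UNIV"
proof -
  obtain h :: "nat \<Rightarrow> 'n" where "bij_betw h {0..<card (UNIV::'n set)} UNIV"
    using ex_bij_betw_nat_finite[of "UNIV::'n set"] by auto
  hence "\<exists>h::nat\<Rightarrow>'n. bij_betw h {..<CARD('n)} UNIV" by (auto simp: atLeast0LessThan)
  thus ?thesis unfolding from_idx_def by (rule someI_ex)
qed

lemma sum_from_idx: "(\<Sum>k<CARD('n). f (from_idx k :: 'n::finite)) = (\<Sum>k\<in>UNIV. f k)"
  using sum.reindex_bij_betw[OF bij_betw_from_idx, of f] by simp

lemma from_idx_inj: "i < CARD('n::finite) \<Longrightarrow> j < CARD('n) \<Longrightarrow> (from_idx i :: 'n) = from_idx j \<longleftrightarrow> i = j"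
  using bij_betw_from_idx[where 'n='n] by (metis bij_betw_iff_bijections lessThan_iff)

lemma from_idx_surj: obtains i where "i < CARD('n::finite)" "j = (from_idx i :: 'n)"
proof -
  have "j \<in> from_idx ` {..<CARD('n)}" using bij_betw_from_idx[where 'n='n] by (simp add: bij_betw_def)
  thus thesis using that by blast
qed

lemma inv_into_from_idx: "i < CARD('n::finite) \<Longrightarrow> inv_into {..<CARD('n)} (from_idx::nat\<Rightarrow>'n) (from_idx i) = i"
  using bij_betw_from_idx[where 'n='n] by (simp add: bij_betw_def)

definition jnf_mat :: "real^'n^'n \<Rightarrow> complex mat" where
  "jnf_mat X = Matrix.mat CARD('n::finite) CARD('n) (\<lambda>(i,j). complex_of_real (X $ from_idx i $ from_idx j))"

lemma jnf_mat_carrier: "jnf_mat (X::real^'n::finite^'n) \<in> carrier_mat CARD('n) CARD('n)"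
  unfolding jnf_mat_def by auto

lemma jnf_mat_mult: "jnf_mat ((X::real^'n::finite^'n) ** Y) = jnf_mat X * jnf_mat Y"
proof (rule eq_matI)
  fix i j assume "i < dim_row (jnf_mat X * jnf_mat Y)" and "j < dim_col (jnf_mat X * jnf_mat Y)"
  hence i: "i < CARD('n)" and j: "j < CARD('n)" by (auto simp: jnf_mat_def)
  have "(jnf_mat X * jnf_mat Y) $$ (i,j)
      = complex_of_real (\<Sum>k<CARD('n). X $ from_idx i $ from_idx k * Y $ from_idx k $ from_idx j)"
    using i j by (simp add: jnf_mat_def scalar_prod_def atLeast0LessThan)
  also have "\<dots> = complex_of_real (\<Sum>k\<in>UNIV. X $ from_idx i $ k * Y $ k $ from_idx j)"
    by (subst sum_from_idx[of "\<lambda>k. X $ from_idx i $ k * Y $ k $ from_idx j"]) simp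
  finally show "jnf_mat (X ** Y) $$ (i, j) = (jnf_mat X * jnf_mat Y) $$ (i, j)"
    using i j by (simp add: jnf_mat_def matrix_matrix_mult_def)
qed (auto simp: jnf_mat_def)

lemma jnf_mat_one: "jnf_mat (Finite_Cartesian_Product.mat 1 :: real^'n::finite^'n) = 1\<^sub>m CARD('n)"
  by (rule eq_matI) (simp_all add: jnf_mat_def Finite_Cartesian_Product.mat_def from_idx_inj)

lemma mpow_Suc_right: "mpow X (Suc k) = mpow X k ** X"
  by (induction k) (auto simp: matrix_mul_assoc)

lemma mpow_add: "mpow X (k + m) = mpow X k ** mpow X m"
  by (induction k) (simp_all add: matrix_mul_assoc)

lemma mpow_Suc_mult_vec: "mpow X (Suc k) *v z = mpow X k *v (X *v z)"
  by (simp only: mpow_Suc_right matrix_vector_mul_assoc)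

lemma mpow_scaleR: "mpow (s *\<^sub>R X) k = s ^ k *\<^sub>R mpow (X::real^'n::finite^'n) k"
proof (induction k)
  case (Suc k)
  thus ?case by (simp add: Finite_Cartesian_Product.vec_eq_iff matrix_matrix_mult_def
      sum_distrib_left mult_ac)
qed simp

lemma jnf_mat_mpow: "jnf_mat (mpow (X::real^'n::finite^'n) k) = jnf_mat X ^\<^sub>m k"
proof (induction k)
  case 0 thus ?case using jnf_mat_carrier[of X] by (simp add: jnf_mat_one)
next
  case (Suc k) thus ?case by (simp only: mpow_Suc_right jnf_mat_mult) simp
qed


definition cplx_eigenvalues :: "real^'n::finite^'n \<Rightarrow> complex set" where
  "cplx_eigenvalues X = {z. \<exists>w::complex^'n. w \<noteq> 0 \<and> cplx_mat X *v w = z *s w}"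

lemma cplx_mat_mult_vec_from_idx:
  "(cplx_mat X *v w) $ from_idx i = (\<Sum>k<CARD('n). complex_of_real (X $ from_idx i $ from_idx k) * w $ from_idx k)"
  for X :: "real^'n::finite^'n"
  by (subst sum_from_idx) (simp add: matrix_vector_mult_def cplx_mat_def)

lemma spectrum_jnf_mat_subset: "spectrum (jnf_mat X) \<subseteq> cplx_eigenvalues (X::real^'n::finite^'n)"
proof
  fix z assume "z \<in> spectrum (jnf_mat X)"
  then obtain v where v: "v \<in> carrier_vec CARD('n)" "v \<noteq> 0\<^sub>v CARD('n)" "jnf_mat X *\<^sub>v v = z \<cdot>\<^sub>v v"
    unfolding spectrum_def eigenvalue_def eigenvector_def by (auto simp: jnf_mat_def)
  define w :: "complex^'n" where "w = (\<chi> j. v $ (inv_into {..<CARD('n)} from_idx j))"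
  have wv: "w $ from_idx i = v $ i" if "i < CARD('n)" for i
    using that by (simp add: w_def inv_into_from_idx)
  from v(1,2) obtain i where i: "i < CARD('n)" "v $ i \<noteq> 0" by (auto simp: vec_eq_iff)
  hence "w \<noteq> 0" using wv[OF i(1)] by (metis zero_index)
  moreover have "cplx_mat X *v w = z *s w"
  proof (subst Finite_Cartesian_Product.vec_eq_iff, rule allI)
    fix j :: 'n
    obtain i where i: "i < CARD('n)" "j = from_idx i" by (rule from_idx_surj)
    have "(cplx_mat X *v w) $ from_idx i = (jnf_mat X *\<^sub>v v) $ i"
      using i v(1) by (simp add: cplx_mat_mult_vec_from_idx wv jnf_mat_def scalar_prod_def atLeast0LessThan)
    also have "\<dots> = z * v $ i" using v(3) i v(1) by simp
    finally show "(cplx_mat X *v w) $ j = (z *s w) $ j" using i wv by simp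
  qed
  ultimately show "z \<in> cplx_eigenvalues X" unfolding cplx_eigenvalues_def by blast
qed

lemma cplx_eigenvalues_subset_spectrum: "cplx_eigenvalues X \<subseteq> spectrum (jnf_mat (X::real^'n::finite^'n))"
proof
  fix z assume "z \<in> cplx_eigenvalues X"
  then obtain w :: "complex^'n" where w: "w \<noteq> 0" "cplx_mat X *v w = z *s w"
    unfolding cplx_eigenvalues_def by blast
  define v where "v = vec CARD('n) (\<lambda>i. w $ from_idx i)"
  have "v \<noteq> 0\<^sub>v CARD('n)"
  proof
    assume "v = 0\<^sub>v CARD('n)"
    hence "w $ from_idx i = 0" if "i < CARD('n)" for i using that
      by (metis index_vec index_zero_vec(1) v_def)
    hence "w = 0" by (metis from_idx_surj Finite_Cartesian_Product.vec_eq_iff zero_index)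
    thus False using w by simp
  qed
  moreover have "jnf_mat X *\<^sub>v v = z \<cdot>\<^sub>v v"
  proof (rule eq_vecI)
    fix i assume "i < dim_vec (z \<cdot>\<^sub>v v)"
    hence i: "i < CARD('n)" by (simp add: v_def)
    have "(jnf_mat X *\<^sub>v v) $ i = (cplx_mat X *v w) $ from_idx i"
      using i by (simp add: cplx_mat_mult_vec_from_idx v_def jnf_mat_def scalar_prod_def atLeast0LessThan)
    also have "\<dots> = z * w $ from_idx i" using w(2) by simp
    finally show "(jnf_mat X *\<^sub>v v) $ i = (z \<cdot>\<^sub>v v) $ i" using i by (simp add: v_def)
  qed (simp add: jnf_mat_def v_def)
  moreover have "v \<in> carrier_vec CARD('n)" by (simp add: v_def)
  ultimately show "z \<in> spectrum (jnf_mat X)"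
    unfolding spectrum_def eigenvalue_def eigenvector_def using jnf_mat_carrier[of X] by auto
qed

lemma spectrum_jnf_mat: "spectrum (jnf_mat X) = cplx_eigenvalues (X::real^'n::finite^'n)"
  using spectrum_jnf_mat_subset cplx_eigenvalues_subset_spectrum by (rule equalityI)

lemma spec_radius_eq_spectral_radius: "spec_radius X = spectral_radius (jnf_mat (X::real^'n::finite^'n))"
  unfolding spec_radius_def spectral_radius_def spectrum_jnf_mat cplx_eigenvalues_def ..

lemma finite_cplx_eigenvalues: "finite (cplx_eigenvalues (X::real^'n::finite^'n))"
  using card_finite_spectrum(1)[OF jnf_mat_carrier[of X]] by (simp add: spectrum_jnf_mat)

lemma cplx_eigenvalues_nonempty: "cplx_eigenvalues (X::real^'n::finite^'n) \<noteq> {}"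
  using spectrum_non_empty[OF jnf_mat_carrier[of X]] by (simp add: spectrum_jnf_mat)

lemma cplx_mat_scaleR_mult_vec: "cplx_mat (s *\<^sub>R X) *v w = complex_of_real s *s (cplx_mat X *v w)"
  for X :: "real^'n::finite^'n"
  by (simp add: Finite_Cartesian_Product.vec_eq_iff matrix_vector_mult_def cplx_mat_def
      sum_distrib_left mult.assoc)

lemma cplx_eigenvalues_scaleR:
  assumes "s > 0"
  shows "cplx_eigenvalues (s *\<^sub>R X) = (\<lambda>z. complex_of_real s * z) ` cplx_eigenvalues (X::real^'n::finite^'n)"
proof (rule Set.set_eqI, rule iffI)
  fix z assume "z \<in> cplx_eigenvalues (s *\<^sub>R X)"
  then obtain w :: "complex^'n" where w: "w \<noteq> 0" "complex_of_real s *s (cplx_mat X *v w) = z *s w"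
    unfolding cplx_eigenvalues_def cplx_mat_scaleR_mult_vec by blast
  hence "cplx_mat X *v w = (z / complex_of_real s) *s w" using assms
    by (simp add: Finite_Cartesian_Product.vec_eq_iff field_simps)
  hence "z / complex_of_real s \<in> cplx_eigenvalues X" using w unfolding cplx_eigenvalues_def by blast
  moreover have "z = complex_of_real s * (z / complex_of_real s)" using assms by simp
  ultimately show "z \<in> (\<lambda>z. complex_of_real s * z) ` cplx_eigenvalues X" by blast
next
  fix z assume "z \<in> (\<lambda>z. complex_of_real s * z) ` cplx_eigenvalues X"
  then obtain y w where "z = complex_of_real s * y" "w \<noteq> 0" "cplx_mat X *v w = y *s w"
    unfolding cplx_eigenvalues_def by blast
  thus "z \<in> cplx_eigenvalues (s *\<^sub>R X)" unfolding cplx_eigenvalues_def cplx_mat_scaleR_mult_vec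
    by (auto simp: Finite_Cartesian_Product.vec_eq_iff)
qed

lemma spec_radius_nonneg: "0 \<le> spec_radius (X::real^'n::finite^'n)"
proof -
  obtain z where "z \<in> cplx_eigenvalues X" using cplx_eigenvalues_nonempty by blast
  hence "norm z \<le> spec_radius X" unfolding spec_radius_def cplx_eigenvalues_def[symmetric]
    using finite_cplx_eigenvalues by (intro Max_ge) auto
  thus ?thesis by (meson norm_ge_zero order_trans)
qed

lemma spec_radius_scaleR:
  assumes "s > 0"
  shows "spec_radius (s *\<^sub>R X) = s * spec_radius (X::real^'n::finite^'n)"
proof -
  have "norm ` cplx_eigenvalues (s *\<^sub>R X) = (\<lambda>x. s * x) ` (norm ` cplx_eigenvalues X)"
    unfolding cplx_eigenvalues_scaleR[OF assms] image_image using assms by (simp add: norm_mult)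
  moreover have "Max ((\<lambda>x. s * x) ` (norm ` cplx_eigenvalues X)) = s * Max (norm ` cplx_eigenvalues X)"
    by (rule mono_Max_commute[symmetric])
       (use assms finite_cplx_eigenvalues cplx_eigenvalues_nonempty in \<open>auto simp: mono_def\<close>)
  ultimately show ?thesis unfolding spec_radius_def cplx_eigenvalues_def[symmetric] by simp
qed

locale mpow_decay =
  fixes A :: "real^'n::finite^'n" and s C :: real
  assumes mpow_entry_bound: "\<And>k i j. \<bar>mpow A k $ i $ j\<bar> * s ^ k \<le> C"
    and rate_pos: "s > 0"

lemma mpow_decay_faster_than:
  fixes A :: "real^'n::finite^'n"
  assumes "b * spec_radius A < 1" and "b > 0"
  obtains s C where "mpow_decay A s C" "b < s"
proof -
  define \<rho> where "\<rho> = spec_radius A"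
  have pos: "1 + b * \<rho> > 0"
    using spec_radius_nonneg[of A] assms(2) by (simp add: \<rho>_def add_pos_nonneg)
  define s where "s = 2 * b / (1 + b * \<rho>)"
  have sb: "b < s" unfolding s_def using assms pos by (simp add: field_simps \<rho>_def)
  hence s_pos: "s > 0" using assms(2) by simp
  have "s * \<rho> < 1" unfolding s_def using assms pos by (simp add: field_simps \<rho>_def)
  hence "spectral_radius (jnf_mat (s *\<^sub>R A)) < 1"
    unfolding spec_radius_eq_spectral_radius[symmetric] spec_radius_scaleR[OF s_pos] \<rho>_def .
  from spectral_radius_jnf_norm_bound_less_1_upper_triangular[OF jnf_mat_carrier this]
  obtain C where C: "\<And>k. norm_bound (jnf_mat (s *\<^sub>R A) ^\<^sub>m k) C" by blast
  have "\<bar>mpow A k $ i $ j\<bar> * s ^ k \<le> C" for k and i j :: 'n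
  proof -
    obtain i' where i': "i' < CARD('n)" "i = from_idx i'" by (rule from_idx_surj)
    obtain j' where j': "j' < CARD('n)" "j = from_idx j'" by (rule from_idx_surj)
    have "norm ((jnf_mat (s *\<^sub>R A) ^\<^sub>m k) $$ (i', j')) \<le> C"
      using C[of k] i' j' jnf_mat_carrier[of "s *\<^sub>R A"] unfolding norm_bound_def by auto
    also have "(jnf_mat (s *\<^sub>R A) ^\<^sub>m k) $$ (i', j') = complex_of_real (s ^ k * mpow A k $ i $ j)"
      unfolding jnf_mat_mpow[symmetric] mpow_scaleR using i' j' by (simp add: jnf_mat_def)
    finally show ?thesis using s_pos by (simp only: norm_of_real) (simp add: abs_mult mult.commute)
  qed
  with s_pos sb show thesis by (intro that) (auto simp: mpow_decay_def)
qed

no_notation Matrix.vec_index (infixl "$" 100)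
no_notation Matrix.scalar_prod (infix "\<bullet>" 70)


section \<open>Neumann series\<close>

lemma matrix_inv_right:
  "invertible (X::real^'n::finite^'n) \<Longrightarrow> X ** matrix_inv X = Finite_Cartesian_Product.mat 1"
  and matrix_inv_left:
  "invertible (X::real^'n::finite^'n) \<Longrightarrow> matrix_inv X ** X = Finite_Cartesian_Product.mat 1"
  unfolding invertible_def matrix_inv_def by (metis (mono_tags, lifting) someI_ex)+

context mpow_decay
begin

lemma mpow_scaleR_entry_tendsto_zero:
  assumes "0 \<le> b" "b < s"
  shows "(\<lambda>k. mpow (b *\<^sub>R A) k $ i $ j) \<longlonglongrightarrow> 0"
proof (rule Lim_null_comparison)
  show "\<forall>\<^sub>F k in sequentially. norm (mpow (b *\<^sub>R A) k $ i $ j) \<le> C * (b / s) ^ k"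
  proof (rule always_eventually, rule allI)
    fix k
    have "\<bar>mpow A k $ i $ j\<bar> \<le> C / s ^ k"
      using mpow_entry_bound[of k i j] rate_pos by (simp add: field_simps)
    hence "b ^ k * \<bar>mpow A k $ i $ j\<bar> \<le> b ^ k * (C / s ^ k)"
      using assms by (intro mult_left_mono) auto
    thus "norm (mpow (b *\<^sub>R A) k $ i $ j) \<le> C * (b / s) ^ k"
      using assms by (simp add: mpow_scaleR abs_mult power_divide mult.commute)
  qed
  show "(\<lambda>k. C * (b / s) ^ k) \<longlonglongrightarrow> 0"
    using assms rate_pos by (intro tendsto_mult_right_zero LIMSEQ_power_zero) simp
qed

lemma inner_mpow_scaleR_tendsto_zero:
  assumes "0 \<le> b" "b < s"
  shows "(\<lambda>k. d \<bullet> (mpow (b *\<^sub>R A) k *v z)) \<longlonglongrightarrow> 0"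
proof -
  have "(\<lambda>k. (mpow (b *\<^sub>R A) k *v z) $ i) \<longlonglongrightarrow> 0" for i
    unfolding matrix_vector_mult_def vec_lambda_beta
    by (intro tendsto_null_sum tendsto_mult_left_zero mpow_scaleR_entry_tendsto_zero[OF assms])
  thus ?thesis unfolding inner_vec_def by (intro tendsto_null_sum) (simp add: tendsto_mult_right_zero)
qed

lemma invertible_one_minus_scaleR:
  assumes "0 \<le> b" "b < s"
  shows "invertible (Finite_Cartesian_Product.mat 1 - b *\<^sub>R A)"
proof -
  have "x = 0" if "(Finite_Cartesian_Product.mat 1 - b *\<^sub>R A) *v x = 0" for x
  proof -
    have "(b *\<^sub>R A) *v x = x" using that by (simp add: matrix_vector_mult_diff_rdistrib)
    hence fixed: "mpow (b *\<^sub>R A) k *v x = x" for k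
      by (induction k) (simp_all add: mpow_Suc_mult_vec del: mpow.simps(2))
    show "x = 0"
    proof (subst Finite_Cartesian_Product.vec_eq_iff, rule allI)
      fix i
      have "(\<lambda>k. axis i 1 \<bullet> (mpow (b *\<^sub>R A) k *v x)) \<longlonglongrightarrow> 0"
        by (rule inner_mpow_scaleR_tendsto_zero[OF assms])
      thus "x $ i = 0 $ i" unfolding fixed by (simp add: LIMSEQ_const_iff inner_axis')
    qed
  qed
  thus ?thesis unfolding invertible_left_inverse matrix_left_invertible_ker by blast
qed

lemma neumann_series_sums:
  assumes "0 \<le> b" "b < s"
  shows "(\<lambda>k. b ^ k * (d \<bullet> (mpow A k *v y))) sums
           (d \<bullet> (matrix_inv (Finite_Cartesian_Product.mat 1 - b *\<^sub>R A) *v y))"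
proof -
  define X where "X = Finite_Cartesian_Product.mat 1 - b *\<^sub>R A"
  define z where "z = matrix_inv X *v y"
  have "X *v z = y" unfolding z_def matrix_vector_mul_assoc X_def
    by (simp add: matrix_inv_right[OF invertible_one_minus_scaleR[OF assms]])
  hence Xz: "z - (b *\<^sub>R A) *v z = y" unfolding X_def by (simp add: matrix_vector_mult_diff_rdistrib)
  have telescope: "(\<Sum>k<N. mpow (b *\<^sub>R A) k *v y) = z - mpow (b *\<^sub>R A) N *v z" for N
  proof -
    have "(\<Sum>k<N. mpow (b *\<^sub>R A) k *v y)
        = (\<Sum>k<N. mpow (b *\<^sub>R A) k *v z - mpow (b *\<^sub>R A) (Suc k) *v z)"
      unfolding Xz[symmetric]
      by (simp add: matrix_vector_mult_diff_distrib mpow_Suc_mult_vec del: mpow.simps(2))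
    also have "\<dots> = z - mpow (b *\<^sub>R A) N *v z" by (subst sum_lessThan_telescope') simp
    finally show ?thesis .
  qed
  have partial: "(\<Sum>k<N. b ^ k * (d \<bullet> (mpow A k *v y))) = d \<bullet> z - d \<bullet> (mpow (b *\<^sub>R A) N *v z)" for N
  proof -
    have "(\<Sum>k<N. b ^ k * (d \<bullet> (mpow A k *v y))) = d \<bullet> (\<Sum>k<N. mpow (b *\<^sub>R A) k *v y)"
      unfolding inner_sum_right mpow_scaleR
      by (simp add: scaleR_matrix_vector_assoc[symmetric] inner_scaleR_right)
    thus ?thesis unfolding telescope by (simp add: inner_diff_right)
  qed
  have "(\<lambda>N. d \<bullet> z - d \<bullet> (mpow (b *\<^sub>R A) N *v z)) \<longlonglongrightarrow> d \<bullet> z - 0"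
    by (intro tendsto_diff tendsto_const inner_mpow_scaleR_tendsto_zero[OF assms])
  thus ?thesis unfolding sums_def partial z_def X_def by simp
qed

lemma matrix_inv_mpow_commute:
  assumes "0 \<le> b" "b < s"
  shows "matrix_inv (Finite_Cartesian_Product.mat 1 - b *\<^sub>R A) *v (mpow A m *v u) =
         mpow A m *v (matrix_inv (Finite_Cartesian_Product.mat 1 - b *\<^sub>R A) *v u)"
proof -
  define X where "X = Finite_Cartesian_Product.mat 1 - b *\<^sub>R A"
  have inv: "invertible X" unfolding X_def by (rule invertible_one_minus_scaleR[OF assms])
  define w where "w = matrix_inv X *v u"
  have Xw: "X *v w = u" unfolding w_def matrix_vector_mul_assoc matrix_inv_right[OF inv] by simp
  have comm: "mpow A m ** A = A ** mpow A m" using mpow_Suc_right[of A m] by simp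
  have X_mult: "X *v v = v - b *\<^sub>R (A *v v)" for v
    by (simp add: X_def matrix_vector_mult_diff_rdistrib scaleR_matrix_vector_assoc)
  have "mpow A m *v u = X *v (mpow A m *v w)"
    unfolding Xw[symmetric] X_mult
    by (simp add: matrix_vector_mult_diff_distrib matrix_vector_mult_scaleR matrix_vector_mul_assoc comm)
  hence "matrix_inv X *v (mpow A m *v u) = matrix_inv X *v (X *v (mpow A m *v w))" by (simp only:)
  also have "\<dots> = mpow A m *v w"
    by (simp only: matrix_vector_mul_assoc matrix_mul_assoc matrix_inv_left[OF inv] matrix_mul_lid)
  finally show ?thesis unfolding X_def w_def .
qed

end

section \<open>The closed-form terms as generating functions of the cycle length\<close>

text \<open>The distribution \<open>\<Omega>\<^sub>D(w, \<gamma>)\<close> of the time \<open>w\<close> until the next reception; it vanishes for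
  \<open>w < D\<close> since nothing is transmitted before time \<open>D\<close>.\<close>

definition cycle_len_prob :: "real^'n::finite^'n \<Rightarrow> real^'n^'n \<Rightarrow> real^'n \<Rightarrow> nat \<Rightarrow> 'n \<Rightarrow> nat \<Rightarrow> real" where
  "cycle_len_prob P0 P1 e D g w =
     (if D \<le> w then dvec e \<bullet> (mpow (P1 ** diagm e) (w - D) *v (mpow P0 (D - 1) *v (P1 *v axis g 1)))
      else 0)"

lemma sums_shift_zeros:
  assumes "(\<lambda>k. f (k + n)) sums S" "\<And>i. i < n \<Longrightarrow> f i = (0::real)"
  shows "f sums S"
  using assms(1) unfolding sums_iff_shift using assms(2) by simp

lemma gt_sums:
  assumes "mpow_decay (P1 ** diagm e) s C" "0 \<le> b" "b < s"
  shows "(\<lambda>w. cycle_len_prob P0 P1 e D g w * b ^ w) sums gt P0 P1 e D b g"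
proof (rule sums_shift_zeros[where n = D])
  interpret mpow_decay "P1 ** diagm e" s C by fact
  from sums_mult[OF neumann_series_sums[OF assms(2,3)], of "b ^ D"]
  show "(\<lambda>k. cycle_len_prob P0 P1 e D g (k + D) * b ^ (k + D)) sums gt P0 P1 e D b g"
    unfolding gt_def cycle_len_prob_def by (simp add: power_add mult_ac)
qed (simp add: cycle_len_prob_def)

lemma ft_sums:
  assumes "mpow_decay (P1 ** diagm e) s C" "0 \<le> b" "b < s" "D \<le> \<nu>"
  shows "(\<lambda>w. if \<nu> \<le> w then cycle_len_prob P0 P1 e D g w * b ^ w else 0) sums ft P0 P1 e D \<nu> b g"
proof (rule sums_shift_zeros[where n = \<nu>])
  interpret mpow_decay "P1 ** diagm e" s C by fact
  define u where "u = mpow (P1 ** diagm e) (\<nu> - D) *v (mpow P0 (D - 1) *v (P1 *v axis g 1))"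
  have "(\<lambda>k. b ^ \<nu> * (b ^ k * (dvec e \<bullet> (mpow (P1 ** diagm e) k *v u)))) sums ft P0 P1 e D \<nu> b g"
    using sums_mult[OF neumann_series_sums[OF assms(2,3), of _ u], of "b ^ \<nu>"]
    unfolding ft_def u_def matrix_inv_mpow_commute[OF assms(2,3)] .
  moreover have "cycle_len_prob P0 P1 e D g (k + \<nu>) * b ^ (k + \<nu>)
      = b ^ \<nu> * (b ^ k * (dvec e \<bullet> (mpow (P1 ** diagm e) k *v u)))" for k
  proof -
    have kk: "k + \<nu> - D = k + (\<nu> - D)" using assms(4) by simp
    show ?thesis unfolding cycle_len_prob_def u_def kk mpow_add using assms(4)
      by (simp add: power_add mult_ac matrix_vector_mul_assoc matrix_mul_assoc)
  qed
  ultimately show "(\<lambda>k. if \<nu> \<le> k + \<nu> then cycle_len_prob P0 P1 e D g (k + \<nu>) * b ^ (k + \<nu>) else 0)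
      sums ft P0 P1 e D \<nu> b g"
    by simp
qed simp


section \<open>Probability of the first reception time\<close>

lemma sum_PiE_insert:
  assumes "a \<notin> S"
  shows "(\<Sum>g\<in>Pi\<^sub>E (insert a S) T. f g) = (\<Sum>y\<in>T a. \<Sum>g\<in>Pi\<^sub>E S T. f (g(a := y)))"
proof -
  have "(\<Sum>g\<in>Pi\<^sub>E (insert a S) T. f g) = (\<Sum>p\<in>T a \<times> Pi\<^sub>E S T. f ((\<lambda>(y, g). g(a := y)) p))"
    unfolding PiE_insert_eq by (rule sum.reindex[OF inj_combinator[OF assms], unfolded comp_def])
  also have "\<dots> = (\<Sum>y\<in>T a. \<Sum>g\<in>Pi\<^sub>E S T. f (g(a := y)))"
    by (subst sum.cartesian_product) (simp add: split_def)
  finally show ?thesis .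
qed

definition rec_lik :: "nat \<Rightarrow> real^'n \<Rightarrow> (nat \<Rightarrow> bool) \<Rightarrow> nat \<Rightarrow> 'n \<Rightarrow> real" where
  "rec_lik D e rs k i =
     (if tpol D k then (if rs k then 1 - e $ i else e $ i) else (if rs k then 0 else 1))"

text \<open>\<open>joint_state_prob \<dots> rs m $ i\<close> is \<open>P(\<gamma>\<^sub>m = i, r\<^sub>1 = rs 1, \<dots>, r\<^sub>m = rs m)\<close>, computed by the forward
  recursion of the hidden Markov chain.\<close>

fun joint_state_prob :: "real^'n::finite^'n \<Rightarrow> real^'n^'n \<Rightarrow> real^'n \<Rightarrow> nat \<Rightarrow> 'n \<Rightarrow> (nat \<Rightarrow> bool)
    \<Rightarrow> nat \<Rightarrow> real^'n" where
  "joint_state_prob P0 P1 e D g0 rs 0 = axis g0 1"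
| "joint_state_prob P0 P1 e D g0 rs (Suc m) =
    (\<chi> i. rec_lik D e rs (Suc m) i *
       ((if tpol D m then P1 else P0) *v joint_state_prob P0 P1 e D g0 rs m) $ i)"

lemma chan_prob_rec_lik: "chan_prob P0 P1 e D g0 m gs rs = (if gs 0 = g0 then 1 else 0) *
     (\<Prod>k<m. (if tpol D k then P1 else P0) $ gs (Suc k) $ gs k * rec_lik D e rs (Suc k) (gs (Suc k)))"
  unfolding chan_prob_def rec_lik_def by (rule arg_cong2[where f="(*)"]) (auto intro!: prod.cong)

lemma chan_prob_Suc: "chan_prob P0 P1 e D g0 (Suc m) gs rs = chan_prob P0 P1 e D g0 m gs rs *
     ((if tpol D m then P1 else P0) $ gs (Suc m) $ gs m * rec_lik D e rs (Suc m) (gs (Suc m)))"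
  unfolding chan_prob_rec_lik by simp

lemma chan_prob_upd_future:
  "m < k \<Longrightarrow> chan_prob P0 P1 e D g0 m (gs(k := y)) rs = chan_prob P0 P1 e D g0 m gs rs"
  unfolding chan_prob_rec_lik by (auto intro!: prod.cong arg_cong2[where f="(*)"])

lemma sum_chan_prob_last_state:
  "(\<Sum>gs\<in>Pi\<^sub>E {..m} (\<lambda>_. UNIV). chan_prob P0 P1 e D g0 m gs rs * (if gs m = i then 1 else 0))
     = joint_state_prob P0 P1 e D g0 rs m $ i"
proof (induction m arbitrary: i)
  case 0
  have "{..0::nat} = insert 0 {}" by auto
  hence "(\<Sum>gs\<in>Pi\<^sub>E {..0::nat} (\<lambda>_. UNIV). F gs) = (\<Sum>y\<in>UNIV. F ((\<lambda>x. undefined)(0 := y)))"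
    for F :: "(nat \<Rightarrow> 'a) \<Rightarrow> real"
    by (simp add: sum_PiE_insert fun_upd_def)
  thus ?case by (simp add: chan_prob_rec_lik axis_def mult_if_delta)
next
  case (Suc m)
  let ?T = "\<lambda>_::nat. UNIV :: 'a set"
  let ?P = "if tpol D m then P1 else P0"
  let ?cp = "chan_prob P0 P1 e D g0"
  have sum_if: "(\<Sum>g\<in>G. if Q then F g else 0) = (if Q then sum F G else (0::real))" for Q G F
    by simp
  have "{..Suc m} = insert (Suc m) {..m}" by auto
  hence "(\<Sum>gs\<in>Pi\<^sub>E {..Suc m} ?T. ?cp (Suc m) gs rs * (if gs (Suc m) = i then 1 else 0))
      = (\<Sum>y\<in>UNIV. \<Sum>g\<in>Pi\<^sub>E {..m} ?T. ?cp (Suc m) (g(Suc m := y)) rs * (if y = i then 1 else 0))"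
    by (simp add: sum_PiE_insert)
  also have "\<dots> = (\<Sum>g\<in>Pi\<^sub>E {..m} ?T. ?cp (Suc m) (g(Suc m := i)) rs)"
    by (simp add: if_distrib sum_if cong: if_cong)
  also have "\<dots> = rec_lik D e rs (Suc m) i * (\<Sum>g\<in>Pi\<^sub>E {..m} ?T. ?cp m g rs * ?P $ i $ g m)"
    by (simp add: chan_prob_Suc chan_prob_upd_future sum_distrib_left mult_ac)
  also have "(\<Sum>g\<in>Pi\<^sub>E {..m} ?T. ?cp m g rs * ?P $ i $ g m)
      = (\<Sum>g\<in>Pi\<^sub>E {..m} ?T. \<Sum>j\<in>UNIV. ?P $ i $ j * (?cp m g rs * (if g m = j then 1 else 0)))"
    by (rule sum.cong[OF refl]) (simp add: if_distrib cong: if_cong)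
  also have "\<dots> = (\<Sum>j\<in>UNIV. ?P $ i $ j * joint_state_prob P0 P1 e D g0 rs m $ j)"
    by (subst sum.swap) (simp add: sum_distrib_left[symmetric] Suc.IH)
  finally show ?case by (simp add: matrix_vector_mult_def)
qed

lemma diagm_mult_vec: "diagm e *v v = (\<chi> i. e $ i * v $ i)"
  unfolding diagm_def matrix_vector_mult_def
  by (simp add: if_distrib [of "\<lambda>x. x * _"] cong: if_cong)

context
  fixes P0 P1 :: "real^'n::finite^'n" and e :: "real^'n" and D :: nat and g0 :: 'n and w :: nat
  assumes D_pos: "0 < D"
begin

lemma joint_state_prob_silent:
  assumes "0 < m" "m < D" "m \<le> w"
  shows "joint_state_prob P0 P1 e D g0 (\<lambda>k. k = w) m
     = (if m = w then 0 else mpow P0 (m - 1) *v (P1 *v axis g0 1))"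
  using assms
proof (induction m)
  case (Suc m)
  show ?case
  proof (cases m)
    case 0
    thus ?thesis using Suc.prems
      by (auto simp: rec_lik_def tpol_def Finite_Cartesian_Product.vec_eq_iff)
  next
    case (Suc m')
    have IH: "joint_state_prob P0 P1 e D g0 (\<lambda>k. k = w) m = mpow P0 (m - 1) *v (P1 *v axis g0 1)"
      using Suc.IH Suc.prems \<open>m = Suc m'\<close> by auto
    have "\<not> tpol D m" "\<not> tpol D (Suc m)" using Suc.prems \<open>m = Suc m'\<close> by (auto simp: tpol_def)
    thus ?thesis using IH \<open>m = Suc m'\<close>
      by (auto simp: rec_lik_def Finite_Cartesian_Product.vec_eq_iff matrix_vector_mul_assoc
          matrix_mul_assoc)
  qed
qed simp

lemma joint_state_prob_transmitting:
  assumes "D \<le> m" "m \<le> w"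
  shows "joint_state_prob P0 P1 e D g0 (\<lambda>k. k = w) m
     = (\<chi> i. (if m = w then 1 - e $ i else e $ i) *
          (mpow (P1 ** diagm e) (m - D) *v (mpow P0 (D - 1) *v (P1 *v axis g0 1))) $ i)"
  using assms
proof (induction m rule: dec_induct)
  case base
  obtain D' where D': "D = Suc D'" using D_pos by (cases D) auto
  have "joint_state_prob P0 P1 e D g0 (\<lambda>k. k = w) D'
      = (if D' = 0 then axis g0 1 else mpow P0 (D' - 1) *v (P1 *v axis g0 1))"
  proof (cases D')
    case (Suc k) thus ?thesis using joint_state_prob_silent[of D'] D' base by auto
  qed simp
  moreover have "tpol D D" "tpol D D' \<longleftrightarrow> D' = 0" using D' by (auto simp: tpol_def)
  ultimately show ?case using D'
    by (cases D') (auto simp: rec_lik_def Finite_Cartesian_Product.vec_eq_iff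
        matrix_vector_mul_assoc matrix_mul_assoc)
next
  case (step m)
  have IH: "joint_state_prob P0 P1 e D g0 (\<lambda>k. k = w) m
      = diagm e *v (mpow (P1 ** diagm e) (m - D) *v (mpow P0 (D - 1) *v (P1 *v axis g0 1)))"
    using step by (auto simp: diagm_mult_vec)
  have "tpol D m" "tpol D (Suc m)" using step by (auto simp: tpol_def)
  moreover have "P1 *v joint_state_prob P0 P1 e D g0 (\<lambda>k. k = w) m
      = mpow (P1 ** diagm e) (Suc m - D) *v (mpow P0 (D - 1) *v (P1 *v axis g0 1))"
    unfolding IH using step(1) by (simp add: matrix_vector_mul_assoc Suc_diff_le matrix_mul_assoc)
  ultimately show ?case by (simp add: rec_lik_def Finite_Cartesian_Product.vec_eq_iff)
qed

lemma sum_chan_prob_first_rec: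
  assumes "0 < w"
  shows "(\<Sum>gs\<in>Pi\<^sub>E {..w} (\<lambda>_. UNIV). chan_prob P0 P1 e D g0 w gs (\<lambda>k. k = w))
     = cycle_len_prob P0 P1 e D g0 w"
proof -
  have "(\<Sum>gs\<in>Pi\<^sub>E {..w} (\<lambda>_. UNIV). chan_prob P0 P1 e D g0 w gs (\<lambda>k. k = w))
      = (\<Sum>gs\<in>Pi\<^sub>E {..w} (\<lambda>_. UNIV). \<Sum>i\<in>UNIV.
           chan_prob P0 P1 e D g0 w gs (\<lambda>k. k = w) * (if gs w = i then 1 else 0))"
    by (simp add: if_distrib cong: if_cong)
  also have "\<dots> = (\<Sum>i\<in>UNIV. joint_state_prob P0 P1 e D g0 (\<lambda>k. k = w) w $ i)"
    by (subst sum.swap) (simp add: sum_chan_prob_last_state)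
  also have "\<dots> = cycle_len_prob P0 P1 e D g0 w"
  proof (cases "D \<le> w")
    case True thus ?thesis
      by (simp add: joint_state_prob_transmitting cycle_len_prob_def inner_vec_def dvec_def)
  next
    case False thus ?thesis using joint_state_prob_silent[of w] assms by (simp add: cycle_len_prob_def)
  qed
  finally show ?thesis .
qed

end

lemma sum_col_stochastic_mult_vec:
  assumes "col_stochastic P"
  shows "(\<Sum>i\<in>UNIV. (P *v y) $ i) = (\<Sum>i\<in>UNIV. (y::real^'n::finite) $ i)"
proof -
  have "(\<Sum>i\<in>UNIV. (P *v y) $ i) = (\<Sum>j\<in>UNIV. (\<Sum>i\<in>UNIV. P $ i $ j) * y $ j)"
    by (simp add: matrix_vector_mult_def sum_distrib_right) (rule sum.swap)
  thus ?thesis using assms by (simp add: col_stochastic_def)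
qed

lemma sum_col_stochastic_mpow_mult_vec:
  assumes "col_stochastic P"
  shows "(\<Sum>i\<in>UNIV. (mpow P k *v y) $ i) = (\<Sum>i\<in>UNIV. (y::real^'n::finite) $ i)"
  by (induction k) (simp_all add: sum_col_stochastic_mult_vec[OF assms] matrix_vector_mul_assoc[symmetric])

text \<open>The column sums of \<open>I - P\<^sub>1E\<close> are \<open>d\<close>, and column-stochastic matrices preserve sums.\<close>

lemma gt_at_one:
  assumes "col_stochastic P0" "col_stochastic P1"
    and "invertible (Finite_Cartesian_Product.mat 1 - 1 *\<^sub>R (P1 ** diagm e))"
  shows "gt P0 P1 e D 1 g = 1"
proof -
  define X where "X = Finite_Cartesian_Product.mat 1 - 1 *\<^sub>R (P1 ** diagm e)"
  define u where "u = mpow P0 (D - 1) *v (P1 *v axis g 1)"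
  have col_sums: "(\<Sum>i\<in>UNIV. (X *v z) $ i) = dvec e \<bullet> z" for z
    unfolding X_def
    by (simp add: matrix_vector_mult_diff_rdistrib matrix_vector_mul_assoc[symmetric]
        sum_col_stochastic_mult_vec[OF assms(2)] diagm_mult_vec inner_vec_def dvec_def
        sum_subtractf left_diff_distrib)
  have "X *v (matrix_inv X *v u) = u"
    by (simp add: matrix_vector_mul_assoc matrix_inv_right[OF assms(3)[folded X_def]])
  hence "dvec e \<bullet> (matrix_inv X *v u) = (\<Sum>i\<in>UNIV. u $ i)" by (simp flip: col_sums)
  also have "\<dots> = 1" unfolding u_def sum_col_stochastic_mpow_mult_vec[OF assms(1)]
      sum_col_stochastic_mult_vec[OF assms(2)]
    by (simp add: axis_def)
  finally show ?thesis unfolding gt_def X_def u_def by simp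
qed

section \<open>The closed loop within one cycle\<close>

lemma traj_before_rec:
  assumes "\<And>j. 0 < j \<Longrightarrow> j < w \<Longrightarrow> \<not> rs j" "k \<le> w"
  shows "fst (traj a L x0 vs rs k) = (a + L) ^ k * x0 + (\<Sum>i<k. a ^ (k - 1 - i) * vs i)
     \<and> (k < w \<longrightarrow> snd (traj a L x0 vs rs k) = (a + L) ^ k * x0)"
  using assms(2)
proof (induction k)
  case (Suc k)
  hence IH: "fst (traj a L x0 vs rs k) = (a + L) ^ k * x0 + (\<Sum>i<k. a ^ (k - 1 - i) * vs i)"
    "snd (traj a L x0 vs rs k) = (a + L) ^ k * x0" by auto
  have "a * (\<Sum>i<k. a ^ (k - 1 - i) * vs i) = (\<Sum>i<k. a ^ (Suc k - 1 - i) * vs i)"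
    unfolding sum_distrib_left
    by (rule sum.cong) (auto simp: power_Suc[symmetric] Suc_diff_Suc mult.assoc)
  thus ?case using assms(1) by (simp add: Let_def IH algebra_simps)
qed simp

lemma next_rec_eq:
  assumes "0 < w" "rs w" "\<And>j. 0 < j \<Longrightarrow> j < w \<Longrightarrow> \<not> rs j"
  shows "next_rec rs = w"
  unfolding next_rec_def using assms by (intro Least_equality) (auto simp: not_less[symmetric])

lemma lastrec_before_rec:
  assumes "0 < w" "\<And>j. 0 < j \<Longrightarrow> j < w \<Longrightarrow> \<not> rs j"
  shows "lastrec rs w = 0"
proof -
  have "{i. i < w \<and> (i = 0 \<or> rs i)} = {0}" using assms by auto
  thus ?thesis unfolding lastrec_def by simp
qed

definition cycle_cost :: "real \<Rightarrow> real \<Rightarrow> real \<Rightarrow> real \<Rightarrow> real \<Rightarrow> nat \<Rightarrow> (nat \<Rightarrow> real) \<Rightarrow> real" where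
  "cycle_cost a L c B x0 w vs =
     ((a + L) ^ w * x0 + (\<Sum>i<w. a ^ (w - 1 - i) * vs i))\<^sup>2 - max (c ^ (2 * w) * x0\<^sup>2) B"

lemma hperf_next_rec_eq_cycle_cost:
  assumes "0 < w" "rs w" "\<And>j. 0 < j \<Longrightarrow> j < w \<Longrightarrow> \<not> rs j"
  shows "hperf a L c B x0 vs rs (next_rec rs) = cycle_cost a L c B x0 w vs"
proof -
  have "next_rec rs = w" "lastrec rs w = 0"
    using next_rec_eq lastrec_before_rec assms by blast+
  thus ?thesis unfolding hperf_def cycle_cost_def
    using traj_before_rec[of w rs w a L x0 vs] assms(1,3) by simp
qed


section \<open>Moments of the noise\<close>

locale iid_noise = prob_space Pr for Pr :: "'a measure" +
  fixes v :: "nat \<Rightarrow> 'a \<Rightarrow> real" and M :: real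
  assumes v_meas: "\<forall>k. v k \<in> borel_measurable Pr"
    and v_indep: "indep_vars (\<lambda>_. borel) v UNIV"
    and v_ident: "\<forall>k. distr Pr borel (v k) = distr Pr borel (v 0)"
    and v_sq_int: "integrable Pr (\<lambda>\<omega>. (v 0 \<omega>)\<^sup>2)"
    and v_mean: "expectation (v 0) = 0"
    and v_var: "variance (v 0) = M"
begin

lemma v_measurable[measurable]: "v k \<in> borel_measurable Pr"
  using v_meas by blast

lemma integral_transfer_v0:
  fixes f :: "real \<Rightarrow> real"
  assumes [measurable]: "f \<in> borel_measurable borel"
  shows "integrable Pr (\<lambda>\<omega>. f (v k \<omega>)) = integrable Pr (\<lambda>\<omega>. f (v 0 \<omega>))"
    and "(\<integral>\<omega>. f (v k \<omega>) \<partial>Pr) = (\<integral>\<omega>. f (v 0 \<omega>) \<partial>Pr)"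
  using integrable_distr_eq[of "v k" Pr borel f] integrable_distr_eq[of "v 0" Pr borel f]
    integral_distr[of "v k" Pr borel f] integral_distr[of "v 0" Pr borel f] v_ident[rule_format, of k]
  by simp_all

lemma integrable_v: "integrable Pr (v k)"
proof -
  have "integrable Pr (v 0)" by (rule square_integrable_imp_integrable[OF _ v_sq_int]) simp
  thus ?thesis using integral_transfer_v0(1)[of "\<lambda>x. x" k] by simp
qed

lemma expectation_v: "expectation (v k) = 0"
  using integral_transfer_v0(2)[of "\<lambda>x. x" k] v_mean by simp

lemma indep_var_v:
  assumes "i \<noteq> j"
  shows "indep_var borel (v i) borel (v j)"
proof -
  have "indep_var borel ((\<lambda>f. f i) \<circ> (\<lambda>\<omega>. restrict (\<lambda>i. v i \<omega>) {i}))
                  borel ((\<lambda>f. f j) \<circ> (\<lambda>\<omega>. restrict (\<lambda>i. v i \<omega>) {j}))"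
    using assms by (intro indep_var_compose[OF indep_var_restrict[OF v_indep]]) auto
  also have "(\<lambda>f. f i) \<circ> (\<lambda>\<omega>. restrict (\<lambda>i. v i \<omega>) {i}) = v i" by auto
  also have "(\<lambda>f. f j) \<circ> (\<lambda>\<omega>. restrict (\<lambda>i. v i \<omega>) {j}) = v j" by auto
  finally show ?thesis .
qed

lemma integrable_v_mult: "integrable Pr (\<lambda>\<omega>. v i \<omega> * v j \<omega>)"
proof (cases "i = j")
  case True
  thus ?thesis using integral_transfer_v0(1)[of "\<lambda>x. x\<^sup>2" i] v_sq_int by (simp add: power2_eq_square)
next
  case False
  thus ?thesis using indep_var_integrable[OF indep_var_v integrable_v integrable_v] by simp
qed

lemma expectation_v_mult: "expectation (\<lambda>\<omega>. v i \<omega> * v j \<omega>) = (if i = j then M else 0)"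
proof (cases "i = j")
  case True
  thus ?thesis using integral_transfer_v0(2)[of "\<lambda>x. x\<^sup>2" i] v_var v_mean
    by (simp add: power2_eq_square)
next
  case False
  thus ?thesis using indep_var_lebesgue_integral[OF indep_var_v integrable_v integrable_v] expectation_v
    by simp
qed

lemma integrable_weighted_noise_sum: "integrable Pr (\<lambda>\<omega>. \<Sum>i<w. f i * v i \<omega>)"
  and expectation_weighted_noise_sum: "expectation (\<lambda>\<omega>. \<Sum>i<w. f i * v i \<omega>) = 0"
  using integrable_v expectation_v
  by (simp_all add: Bochner_Integration.integral_sum integrable_mult_right
      Bochner_Integration.integrable_sum)

lemma integrable_weighted_noise_sum_sq: "integrable Pr (\<lambda>\<omega>. (\<Sum>i<w. f i * v i \<omega>)\<^sup>2)"
  and expectation_weighted_noise_sum_sq: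
    "expectation (\<lambda>\<omega>. (\<Sum>i<w. f i * v i \<omega>)\<^sup>2) = M * (\<Sum>i<w. (f i)\<^sup>2)"
proof -
  have sq: "(\<lambda>\<omega>. (\<Sum>i<w. f i * v i \<omega>)\<^sup>2) = (\<lambda>\<omega>. \<Sum>i<w. \<Sum>j<w. f i * f j * (v i \<omega> * v j \<omega>))"
    by (simp add: power2_eq_square sum_product mult_ac)
  show "integrable Pr (\<lambda>\<omega>. (\<Sum>i<w. f i * v i \<omega>)\<^sup>2)"
    unfolding sq by (intro Bochner_Integration.integrable_sum integrable_mult_right integrable_v_mult)
  have "expectation (\<lambda>\<omega>. \<Sum>i<w. \<Sum>j<w. f i * f j * (v i \<omega> * v j \<omega>))
      = (\<Sum>i<w. \<Sum>j<w. f i * f j * (if i = j then M else 0))"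
    by (simp add: Bochner_Integration.integral_sum integrable_mult_right integrable_v_mult
        expectation_v_mult Bochner_Integration.integrable_sum)
  also have "\<dots> = M * (\<Sum>i<w. (f i)\<^sup>2)"
    by (simp add: if_distrib sum_distrib_left power2_eq_square mult_ac cong: if_cong)
  finally show "expectation (\<lambda>\<omega>. (\<Sum>i<w. f i * v i \<omega>)\<^sup>2) = M * (\<Sum>i<w. (f i)\<^sup>2)"
    unfolding sq .
qed

end


section \<open>Expected cost of one cycle\<close>

lemma D_le_nu: "D \<le> nu D B c x0"
  unfolding nu_def by auto

text \<open>\<open>\<nu>\<close> is the first time \<open>w \<ge> D\<close> at which the threshold \<open>B\<close> dominates \<open>c\<^sup>2\<^sup>w x\<^sub>0\<^sup>2\<close>.\<close>

lemma max_threshold_eq_if_nu_le: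
  assumes "0 < B" "0 < c\<^sup>2" "c\<^sup>2 < 1" "D \<le> w"
  shows "max (c ^ (2 * w) * x0\<^sup>2) B = (if nu D B c x0 \<le> w then B else c ^ (2 * w) * x0\<^sup>2)"
proof (cases "x0 = 0")
  case True thus ?thesis using assms by (simp add: nu_def)
next
  case False
  define thr where "thr = ln (x0\<^sup>2 / B) / ln (1 / c\<^sup>2)"
  have ln_pos: "ln (1 / c\<^sup>2) > 0" using assms(2,3) by simp
  have "(c ^ w)\<^sup>2 = (c\<^sup>2) ^ w" by (simp flip: power_mult add: mult.commute)
  hence "c ^ (2 * w) * x0\<^sup>2 \<le> B \<longleftrightarrow> x0\<^sup>2 / B \<le> (1 / c\<^sup>2) ^ w"
    using assms(1,2) by (simp add: field_simps power_mult power_divide)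
  also have "\<dots> \<longleftrightarrow> ln (x0\<^sup>2 / B) \<le> ln ((1 / c\<^sup>2) ^ w)"
    using False assms(1,2) by (intro ln_le_cancel_iff[symmetric]) auto
  also have "\<dots> \<longleftrightarrow> thr \<le> w"
    unfolding thr_def using ln_pos assms(2) by (simp add: divide_le_eq ln_realpow mult.commute)
  also have "\<dots> \<longleftrightarrow> nu D B c x0 \<le> w"
    using False assms(4) by (simp add: nu_def thr_def nat_le_iff ceiling_le_iff)
  finally show ?thesis by auto
qed

lemma sigma_sets_vimage_compose_subset:
  assumes [measurable]: "Z \<in> measurable M N" "F \<in> borel_measurable N"
  shows "sigma_sets (space M) {(\<lambda>\<omega>. F (Z \<omega>) :: real) -` A \<inter> space M | A. A \<in> sets borel}
         \<subseteq> sets (vimage_algebra (space M) Z N)"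
proof -
  have "{(\<lambda>\<omega>. F (Z \<omega>) :: real) -` A \<inter> space M | A. A \<in> sets borel} \<subseteq> sets (vimage_algebra (space M) Z N)"
  proof safe
    fix A :: "real set" assume [measurable]: "A \<in> sets borel"
    have "(\<lambda>\<omega>. F (Z \<omega>)) -` A \<inter> space M = Z -` (F -` A \<inter> space N) \<inter> space M"
      using measurable_space[OF assms(1)] by auto
    moreover have "F -` A \<inter> space N \<in> sets N" by measurable
    ultimately show "(\<lambda>\<omega>. F (Z \<omega>)) -` A \<inter> space M \<in> sets (vimage_algebra (space M) Z N)"
      using sets_vimage_algebra2[of Z "space M" N] measurable_space[OF assms(1)] by blast
  qed
  from sets.sigma_sets_subset[OF this] show ?thesis by simp
qed

lemma sums_indicator_disjoint_family:
  fixes f :: "nat \<Rightarrow> real"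
  assumes "disjoint_family A" "x \<in> A n"
  shows "(\<lambda>m. f m * indicator (A m) x) sums f n"
proof -
  have "(\<lambda>m. f m * indicator (A m) x) = (\<lambda>m. if m = n then f m else 0)"
    using assms by (auto simp: disjoint_family_on_def indicator_def fun_eq_iff)
  thus ?thesis using sums_single[of n f] by simp
qed

locale cycle_model = iid_noise Pr v M for Pr v M +
  fixes \<gamma> :: "nat \<Rightarrow> 'a \<Rightarrow> 'n::finite" and r :: "nat \<Rightarrow> 'a \<Rightarrow> bool"
    and a L c B x0 :: real
    and P0 P1 :: "real^'n^'n" and e :: "real^'n"
    and D :: nat and g0 :: 'n
  assumes a_gt: "\<bar>a\<bar> > 1"
    and abar_lt: "(a + L)\<^sup>2 < 1"
    and c_bounds: "(a + L)\<^sup>2 < c\<^sup>2" "c\<^sup>2 < 1"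
    and M_pos: "M > 0" and B_pos: "B > 0"
    and P0_st: "col_stochastic P0" and P1_st: "col_stochastic P1"
    and rho: "a\<^sup>2 * spec_radius (P1 ** diagm e) < 1"
    and D_pos: "0 < D"
    and \<gamma>_meas: "\<forall>k. \<gamma> k \<in> measurable Pr (count_space UNIV)"
    and r_meas: "\<forall>k. r k \<in> measurable Pr (count_space UNIV)"
    and chan_law: "\<forall>m gs rs. measure Pr {\<omega> \<in> space Pr. (\<forall>k\<le>m. \<gamma> k \<omega> = gs k) \<and> (\<forall>k\<in>{1..m}. r k \<omega> = rs k)}
                      = chan_prob P0 P1 e D g0 m gs rs"
    and noise_chan_indep:
      "indep_set
         (sets (vimage_algebra (space Pr) (\<lambda>\<omega> k. v k \<omega>) (Pi\<^sub>M UNIV (\<lambda>_. borel))))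
         (sets (vimage_algebra (space Pr) (\<lambda>\<omega> k. (\<gamma> k \<omega>, r k \<omega>)) (Pi\<^sub>M UNIV (\<lambda>_. count_space UNIV))))"
begin

abbreviation cost :: "'a \<Rightarrow> real" where
  "cost \<equiv> \<lambda>\<omega>. hperf a L c B x0 (\<lambda>k. v k \<omega>) (\<lambda>k. r k \<omega>) (next_rec (\<lambda>k. r k \<omega>))"

abbreviation \<Omega> :: "nat \<Rightarrow> real" where
  "\<Omega> \<equiv> cycle_len_prob P0 P1 e D g0"

lemma r_measurable[measurable]: "r k \<in> measurable Pr (count_space UNIV)"
  using r_meas by blast

lemma \<gamma>_measurable[measurable]: "\<gamma> k \<in> measurable Pr (count_space UNIV)"
  using \<gamma>_meas by blast

lemma traj_measurable:
  "(\<lambda>\<omega>. fst (traj a L x0 (\<lambda>k. v k \<omega>) (\<lambda>k. r k \<omega>) j)) \<in> borel_measurable Pr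
   \<and> (\<lambda>\<omega>. snd (traj a L x0 (\<lambda>k. v k \<omega>) (\<lambda>k. r k \<omega>) j)) \<in> borel_measurable Pr"
proof (induction j)
  case (Suc j)
  note [measurable] = Suc[THEN conjunct1] Suc[THEN conjunct2]
  show ?case by (simp add: Let_def) measurable
qed simp

lemma lastrec_measurable[measurable]:
  "(\<lambda>\<omega>. lastrec (\<lambda>k. r k \<omega>) k) \<in> measurable Pr (count_space UNIV)"
proof -
  have recs: "(\<lambda>\<omega>. {i. i < k \<and> (i = 0 \<or> r i \<omega>)}) \<in> measurable Pr (count_space (Pow {..<k}))"
  proof (rule measurable_count_space_eq2[THEN iffD2], simp, intro conjI ballI)
    show "(\<lambda>\<omega>. {i. i < k \<and> (i = 0 \<or> r i \<omega>)}) \<in> space Pr \<rightarrow> Pow {..<k}" by auto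
  next
    fix T assume "T \<in> Pow {..<k}"
    have "(\<lambda>\<omega>. {i. i < k \<and> (i = 0 \<or> r i \<omega>)}) -` {T} \<inter> space Pr
       = {\<omega> \<in> space Pr. \<forall>i. (i \<in> T) = (i < k \<and> (i = 0 \<or> r i \<omega>))}"
      by (auto simp: set_eq_iff)
    also have "\<dots> \<in> sets Pr" by measurable
    finally show "(\<lambda>\<omega>. {i. i < k \<and> (i = 0 \<or> r i \<omega>)}) -` {T} \<inter> space Pr \<in> sets Pr" .
  qed
  have "(\<lambda>\<omega>. Max {i. i < k \<and> (i = 0 \<or> r i \<omega>)}) \<in> measurable Pr (count_space UNIV)"
    by (rule measurable_compose_countable'[OF _ recs]) (auto intro: countable_finite)
  thus ?thesis unfolding lastrec_def .
qed

lemma cost_measurable[measurable]: "cost \<in> borel_measurable Pr"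
proof -
  note [measurable] = traj_measurable[THEN conjunct1]
  have "(\<lambda>\<omega>. hperf a L c B x0 (\<lambda>k. v k \<omega>) (\<lambda>k. r k \<omega>) k) \<in> borel_measurable Pr" for k
  proof -
    have "(\<lambda>\<omega>. (\<lambda>j \<omega>. (fst (traj a L x0 (\<lambda>k. v k \<omega>) (\<lambda>k. r k \<omega>) k))\<^sup>2
       - max (c ^ (2 * (k - j)) * (fst (traj a L x0 (\<lambda>k. v k \<omega>) (\<lambda>k. r k \<omega>) j))\<^sup>2) B)
         (lastrec (\<lambda>k. r k \<omega>) k) \<omega>) \<in> borel_measurable Pr"
      by (rule measurable_compose_countable'[OF _ lastrec_measurable]) auto
    thus ?thesis unfolding hperf_def .
  qed
  moreover have "(\<lambda>\<omega>. next_rec (\<lambda>k. r k \<omega>)) \<in> measurable Pr (count_space UNIV)"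
    unfolding next_rec_def by measurable
  ultimately show ?thesis by (rule measurable_compose_countable') auto
qed

lemma one_lt_a2: "1 < a\<^sup>2"
proof -
  have "1 < \<bar>a\<bar> * \<bar>a\<bar>" using a_gt by (metis abs_ge_zero less_1_mult)
  thus ?thesis by (simp add: power2_eq_square abs_mult[symmetric])
qed

lemma c2_pos: "0 < c\<^sup>2"
  using c_bounds(1) zero_le_power2[of "a + L"] by linarith

lemma mpow_decay_beyond_a2:
  obtains s C where "mpow_decay (P1 ** diagm e) s C" "a\<^sup>2 < s"
proof (rule mpow_decay_faster_than[OF rho])
  show "0 < a\<^sup>2" using one_lt_a2 by linarith
qed (rule that)

definition first_rec :: "nat \<Rightarrow> 'a set" where
  "first_rec w = {\<omega> \<in> space Pr. 0 < w \<and> r w \<omega> \<and> (\<forall>j. 0 < j \<and> j < w \<longrightarrow> \<not> r j \<omega>)}"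

lemma first_rec_sets[measurable]: "first_rec w \<in> sets Pr"
  unfolding first_rec_def by measurable

lemma disjoint_family_first_rec: "disjoint_family first_rec"
  unfolding disjoint_family_on_def first_rec_def by (auto, metis linorder_neqE_nat)

lemma prob_first_rec: "prob (first_rec w) = \<Omega> w"
proof (cases "w = 0")
  case True thus ?thesis using D_pos by (simp add: first_rec_def cycle_len_prob_def)
next
  case False
  define cyl where "cyl gs = {\<omega> \<in> space Pr. (\<forall>k\<le>w. \<gamma> k \<omega> = gs k) \<and> (\<forall>k\<in>{1..w}. r k \<omega> = (k = w))}"
    for gs :: "nat \<Rightarrow> 'n"
  have "first_rec w = (\<Union>gs\<in>Pi\<^sub>E {..w} (\<lambda>_. UNIV). cyl gs)"
  proof (rule Set.set_eqI, rule iffI)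
    fix \<omega> assume "\<omega> \<in> first_rec w"
    hence "\<omega> \<in> cyl (restrict (\<lambda>k. \<gamma> k \<omega>) {..w})" using False
      by (auto simp: first_rec_def cyl_def) (metis Suc_le_lessD le_neq_implies_less)
    moreover have "restrict (\<lambda>k. \<gamma> k \<omega>) {..w} \<in> Pi\<^sub>E {..w} (\<lambda>_. UNIV)" by simp
    ultimately show "\<omega> \<in> (\<Union>gs\<in>Pi\<^sub>E {..w} (\<lambda>_. UNIV). cyl gs)" by blast
  qed (use False in \<open>auto simp: first_rec_def cyl_def\<close>)
  also have "prob \<dots> = (\<Sum>gs\<in>Pi\<^sub>E {..w} (\<lambda>_. UNIV). prob (cyl gs))"
  proof (rule finite_measure_finite_Union)
    show "cyl ` Pi\<^sub>E {..w} (\<lambda>_. UNIV) \<subseteq> sets Pr" unfolding cyl_def by auto measurable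
    show "disjoint_family_on cyl (Pi\<^sub>E {..w} (\<lambda>_. UNIV))"
      unfolding disjoint_family_on_def cyl_def
      by (auto simp: PiE_def extensional_def fun_eq_iff) (metis not_le)
  qed (simp add: finite_PiE)
  also have "\<dots> = (\<Sum>gs\<in>Pi\<^sub>E {..w} (\<lambda>_. UNIV). chan_prob P0 P1 e D g0 w gs (\<lambda>k. k = w))"
    unfolding cyl_def using chan_law by simp
  also have "\<dots> = \<Omega> w" using sum_chan_prob_first_rec[OF D_pos] False by simp
  finally show ?thesis .
qed

lemma cycle_len_prob_nonneg: "0 \<le> \<Omega> w"
  unfolding prob_first_rec[symmetric] by simp

text \<open>The total mass of the cycle-length distribution is \<open>gt\<close> at \<open>b = 1\<close>, which is 1.\<close>

lemma AE_first_rec: "AE \<omega> in Pr. \<exists>w. \<omega> \<in> first_rec w"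
proof -
  obtain s C where decay: "mpow_decay (P1 ** diagm e) s C" and "a\<^sup>2 < s"
    by (rule mpow_decay_beyond_a2)
  hence s: "1 < s" using one_lt_a2 by simp
  have "(\<lambda>w. \<Omega> w * 1 ^ w) sums gt P0 P1 e D 1 g0"
    using s by (intro gt_sums[OF decay]) auto
  moreover have "gt P0 P1 e D 1 g0 = 1"
    using gt_at_one[OF P0_st P1_st mpow_decay.invertible_one_minus_scaleR[OF decay]] s by simp
  ultimately have "(\<lambda>w. prob (first_rec w)) sums 1" unfolding prob_first_rec by simp
  moreover have "(\<lambda>w. prob (first_rec w)) sums prob (\<Union>w. first_rec w)"
    by (rule finite_measure_UNION) (auto simp: disjoint_family_first_rec)
  ultimately have "prob (\<Union>w. first_rec w) = 1" using sums_unique2 by blast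
  from AE_prob_1[OF this] show ?thesis by auto
qed

lemma indep_var_noise_channel:
  assumes [measurable]: "F \<in> borel_measurable (Pi\<^sub>M UNIV (\<lambda>_. borel))"
    and [measurable]: "G \<in> borel_measurable (Pi\<^sub>M UNIV (\<lambda>_. count_space UNIV))"
  shows "indep_var borel (\<lambda>\<omega>. F (\<lambda>k. v k \<omega>) :: real) borel (\<lambda>\<omega>. G (\<lambda>k. (\<gamma> k \<omega>, r k \<omega>)) :: real)"
proof -
  have [measurable]: "(\<lambda>\<omega> k. v k \<omega>) \<in> measurable Pr (Pi\<^sub>M UNIV (\<lambda>_. borel))"
    by (rule measurable_PiM_single') auto
  have "(\<lambda>\<omega>. (\<gamma> k \<omega>, r k \<omega>)) \<in> measurable Pr (count_space UNIV)" for k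
  proof (rule measurable_count_space_eq2_countable[THEN iffD2], intro conjI ballI)
    fix p :: "'n \<times> bool"
    have "(\<lambda>\<omega>. (\<gamma> k \<omega>, r k \<omega>)) -` {p} \<inter> space Pr = {\<omega> \<in> space Pr. \<gamma> k \<omega> = fst p \<and> r k \<omega> = snd p}"
      by (cases p) auto
    also have "\<dots> \<in> sets Pr" by measurable
    finally show "(\<lambda>\<omega>. (\<gamma> k \<omega>, r k \<omega>)) -` {p} \<inter> space Pr \<in> sets Pr" .
  qed simp
  hence [measurable]: "(\<lambda>\<omega> k. (\<gamma> k \<omega>, r k \<omega>)) \<in> measurable Pr (Pi\<^sub>M UNIV (\<lambda>_. count_space UNIV))"
    by (intro measurable_PiM_single') simp_all
  show ?thesis
    unfolding indep_var_eq indep_set_def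
  proof (intro conjI)
    show "indep_sets (case_bool
        (sigma_sets (space Pr) {(\<lambda>\<omega>. F (\<lambda>k. v k \<omega>)) -` A \<inter> space Pr | A. A \<in> sets borel})
        (sigma_sets (space Pr) {(\<lambda>\<omega>. G (\<lambda>k. (\<gamma> k \<omega>, r k \<omega>))) -` A \<inter> space Pr | A. A \<in> sets borel}))
      UNIV"
      using sigma_sets_vimage_compose_subset[of "\<lambda>\<omega> k. v k \<omega>" Pr _ F]
        sigma_sets_vimage_compose_subset[of "\<lambda>\<omega> k. (\<gamma> k \<omega>, r k \<omega>)" Pr _ G]
      by (intro indep_sets_mono_sets[OF noise_chan_indep[unfolded indep_set_def]])
         (auto split: bool.split)
  qed measurable
qed

lemma noise_fun_times_first_rec:
  assumes [measurable]: "F \<in> borel_measurable (Pi\<^sub>M UNIV (\<lambda>_. borel))"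
    and "integrable Pr (\<lambda>\<omega>. F (\<lambda>k. v k \<omega>))"
  shows "integrable Pr (\<lambda>\<omega>. F (\<lambda>k. v k \<omega>) * indicator (first_rec w) \<omega>)"
    and "(\<integral>\<omega>. F (\<lambda>k. v k \<omega>) * indicator (first_rec w) \<omega> \<partial>Pr) = (\<integral>\<omega>. F (\<lambda>k. v k \<omega>) \<partial>Pr) * \<Omega> w"
proof -
  define S :: "(nat \<Rightarrow> 'n \<times> bool) set" where "S = {y. 0 < w \<and> snd (y w) \<and> (\<forall>j. 0 < j \<and> j < w \<longrightarrow> \<not> snd (y j))}"
  have [measurable]: "(\<lambda>y. snd (y j)) \<in> measurable (Pi\<^sub>M UNIV (\<lambda>_. count_space UNIV)) (count_space (UNIV::bool set))"
    for j :: nat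
    by (rule measurable_compose[OF measurable_component_singleton]) auto
  have "S = {y \<in> space (Pi\<^sub>M UNIV (\<lambda>_. count_space (UNIV :: ('n \<times> bool) set))).
      0 < w \<and> snd (y w) \<and> (\<forall>j. 0 < j \<and> j < w \<longrightarrow> \<not> snd (y j))}"
    by (auto simp: S_def space_PiM)
  also have "\<dots> \<in> sets (Pi\<^sub>M UNIV (\<lambda>_. count_space (UNIV :: ('n \<times> bool) set)))" by measurable
  finally have [measurable]: "S \<in> sets (Pi\<^sub>M UNIV (\<lambda>_. count_space UNIV))" .
  have ind_eq: "indicator S (\<lambda>k. (\<gamma> k \<omega>, r k \<omega>)) = (indicator (first_rec w) \<omega> :: real)"
    if "\<omega> \<in> space Pr" for \<omega>
    using that by (simp add: S_def first_rec_def indicator_def)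
  have ind: "indep_var borel (\<lambda>\<omega>. F (\<lambda>k. v k \<omega>)) borel (\<lambda>\<omega>. indicator S (\<lambda>k. (\<gamma> k \<omega>, r k \<omega>)) :: real)"
    by (rule indep_var_noise_channel) measurable
  have int_ind: "integrable Pr (\<lambda>\<omega>. indicator S (\<lambda>k. (\<gamma> k \<omega>, r k \<omega>)) :: real)"
    by (subst Bochner_Integration.integrable_cong[OF refl ind_eq])
       (auto simp: emeasure_eq_measure)
  have "(\<integral>\<omega>. indicator S (\<lambda>k. (\<gamma> k \<omega>, r k \<omega>)) \<partial>Pr) = \<Omega> w"
    by (subst Bochner_Integration.integral_cong[OF refl ind_eq]) (auto simp: prob_first_rec)
  with indep_var_lebesgue_integral[OF ind assms(2) int_ind] indep_var_integrable[OF ind assms(2) int_ind]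
  show "integrable Pr (\<lambda>\<omega>. F (\<lambda>k. v k \<omega>) * indicator (first_rec w) \<omega>)"
    and "(\<integral>\<omega>. F (\<lambda>k. v k \<omega>) * indicator (first_rec w) \<omega> \<partial>Pr) = (\<integral>\<omega>. F (\<lambda>k. v k \<omega>) \<partial>Pr) * \<Omega> w"
    by (simp_all cong: Bochner_Integration.integrable_cong Bochner_Integration.integral_cong
        add: ind_eq)
qed

end

context cycle_model
begin

definition mean_cycle_cost :: "nat \<Rightarrow> real" where
  "mean_cycle_cost w =
     ((a + L)\<^sup>2) ^ w * x0\<^sup>2 + M / (a\<^sup>2 - 1) * ((a\<^sup>2) ^ w - 1) - max (c ^ (2 * w) * x0\<^sup>2) B"

lemma cycle_cost_measurable[measurable]:
  "cycle_cost a L c B x0 w \<in> borel_measurable (Pi\<^sub>M UNIV (\<lambda>_. borel))"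
proof -
  have [measurable]: "(\<lambda>s. s i) \<in> borel_measurable (Pi\<^sub>M UNIV (\<lambda>_. borel))" for i :: nat
    by (rule measurable_component_singleton) simp
  show ?thesis unfolding cycle_cost_def by measurable
qed

lemma integrable_cycle_cost: "integrable Pr (\<lambda>\<omega>. cycle_cost a L c B x0 w (\<lambda>k. v k \<omega>))"
  and expectation_cycle_cost:
    "expectation (\<lambda>\<omega>. cycle_cost a L c B x0 w (\<lambda>k. v k \<omega>)) = mean_cycle_cost w"
proof -
  define q where "q = (a + L) ^ w * x0"
  define Z where "Z \<omega> = (\<Sum>i<w. a ^ (w - 1 - i) * v i \<omega>)" for \<omega>
  define m where "m = max (c ^ (2 * w) * x0\<^sup>2) B"
  have cost_eq: "(\<lambda>\<omega>. cycle_cost a L c B x0 w (\<lambda>k. v k \<omega>)) = (\<lambda>\<omega>. q\<^sup>2 + (Z \<omega>)\<^sup>2 + 2 * q * Z \<omega> - m)"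
    by (simp add: cycle_cost_def q_def Z_def m_def power2_sum)
  have Z: "integrable Pr Z" "expectation Z = 0"
    unfolding Z_def by (rule integrable_weighted_noise_sum expectation_weighted_noise_sum)+
  have Z2: "integrable Pr (\<lambda>\<omega>. (Z \<omega>)\<^sup>2)" "expectation (\<lambda>\<omega>. (Z \<omega>)\<^sup>2) = M * (\<Sum>i<w. (a ^ (w - 1 - i))\<^sup>2)"
    unfolding Z_def by (rule integrable_weighted_noise_sum_sq expectation_weighted_noise_sum_sq)+
  show "integrable Pr (\<lambda>\<omega>. cycle_cost a L c B x0 w (\<lambda>k. v k \<omega>))"
    unfolding cost_eq using Z Z2 by simp
  have sq_pow: "(x ^ n)\<^sup>2 = (x\<^sup>2) ^ n" for x :: real and n
    by (simp flip: power_mult add: mult.commute)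
  have "(\<Sum>i<w. (a ^ (w - 1 - i))\<^sup>2) = (\<Sum>i<w. (a\<^sup>2) ^ (w - Suc i))"
    by (simp add: sq_pow)
  also have "\<dots> = (\<Sum>i<w. (a\<^sup>2) ^ i)" by (rule sum.nat_diff_reindex)
  also have "\<dots> = ((a\<^sup>2) ^ w - 1) / (a\<^sup>2 - 1)"
    using one_lt_a2 by (simp add: sum_gp_strict field_simps)
  finally have geom: "(\<Sum>i<w. (a ^ (w - 1 - i))\<^sup>2) = ((a\<^sup>2) ^ w - 1) / (a\<^sup>2 - 1)" .
  have "expectation (\<lambda>\<omega>. q\<^sup>2 + (Z \<omega>)\<^sup>2 + 2 * q * Z \<omega> - m) = q\<^sup>2 + M * (\<Sum>i<w. (a ^ (w - 1 - i))\<^sup>2) - m"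
    using Z Z2 by (simp add: prob_space)
  also have "\<dots> = mean_cycle_cost w"
    unfolding geom mean_cycle_cost_def q_def m_def by (simp add: power_mult_distrib sq_pow)
  finally show "expectation (\<lambda>\<omega>. cycle_cost a L c B x0 w (\<lambda>k. v k \<omega>)) = mean_cycle_cost w"
    unfolding cost_eq .
qed

lemma expectation_abs_cycle_cost_le:
  "expectation (\<lambda>\<omega>. \<bar>cycle_cost a L c B x0 w (\<lambda>k. v k \<omega>)\<bar>)
     \<le> (2 * x0\<^sup>2 + M / (a\<^sup>2 - 1) + B) * (a\<^sup>2) ^ w"
proof -
  define m where "m = max (c ^ (2 * w) * x0\<^sup>2) B"
  have m_nonneg: "0 \<le> m" unfolding m_def using B_pos by (simp add: le_max_iff_disj)
  have "\<bar>cycle_cost a L c B x0 w s\<bar> \<le> cycle_cost a L c B x0 w s + 2 * m" for s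
    using m_nonneg unfolding cycle_cost_def m_def by (simp add: abs_le_iff)
  hence "expectation (\<lambda>\<omega>. \<bar>cycle_cost a L c B x0 w (\<lambda>k. v k \<omega>)\<bar>)
      \<le> expectation (\<lambda>\<omega>. cycle_cost a L c B x0 w (\<lambda>k. v k \<omega>) + 2 * m)"
    by (intro integral_mono) (use integrable_cycle_cost in auto)
  also have "\<dots> = ((a + L)\<^sup>2) ^ w * x0\<^sup>2 + M / (a\<^sup>2 - 1) * ((a\<^sup>2) ^ w - 1) + m"
    using integrable_cycle_cost expectation_cycle_cost
    by (simp add: prob_space mean_cycle_cost_def m_def)
  also have "\<dots> \<le> x0\<^sup>2 + M / (a\<^sup>2 - 1) * (a\<^sup>2) ^ w + (x0\<^sup>2 + B)"
  proof -
    have "((a + L)\<^sup>2) ^ w * x0\<^sup>2 \<le> x0\<^sup>2"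
      by (rule mult_left_le_one_le) (use abar_lt in \<open>auto simp: power_le_one\<close>)
    moreover have "c ^ (2 * w) * x0\<^sup>2 \<le> x0\<^sup>2"
      by (rule mult_left_le_one_le) (use c_bounds in \<open>auto simp: power_mult power_le_one\<close>)
    hence "m \<le> x0\<^sup>2 + B" unfolding m_def using B_pos by simp
    moreover have "0 \<le> M / (a\<^sup>2 - 1)" using M_pos one_lt_a2 by simp
    ultimately show ?thesis by (simp add: right_diff_distrib)
  qed
  also have "\<dots> \<le> (2 * x0\<^sup>2 + M / (a\<^sup>2 - 1) + B) * (a\<^sup>2) ^ w"
  proof -
    have "(2 * x0\<^sup>2 + B) * 1 \<le> (2 * x0\<^sup>2 + B) * (a\<^sup>2) ^ w"
      using one_lt_a2 B_pos by (intro mult_left_mono) (auto simp: one_le_power)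
    thus ?thesis by (simp add: algebra_simps)
  qed
  finally show ?thesis .
qed

lemma mean_cycle_cost_sums:
  "(\<lambda>w. mean_cycle_cost w * \<Omega> w) sums
     (gt P0 P1 e D ((a + L)\<^sup>2) g0 * x0\<^sup>2
      + M / (a\<^sup>2 - 1) * (gt P0 P1 e D (a\<^sup>2) g0 - gt P0 P1 e D 1 g0)
      - (B * ft P0 P1 e D (nu D B c x0) 1 g0
         + x0\<^sup>2 * (gt P0 P1 e D (c\<^sup>2) g0 - ft P0 P1 e D (nu D B c x0) (c\<^sup>2) g0)))"
proof -
  obtain s C where decay: "mpow_decay (P1 ** diagm e) s C" and "a\<^sup>2 < s"
    by (rule mpow_decay_beyond_a2)
  hence lt: "(a + L)\<^sup>2 < s" "c\<^sup>2 < s" "1 < s" "a\<^sup>2 < s"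
    using one_lt_a2 abar_lt c_bounds by linarith+
  let ?\<nu> = "nu D B c x0"
  have "(\<lambda>w. x0\<^sup>2 * (\<Omega> w * ((a + L)\<^sup>2) ^ w) + M / (a\<^sup>2 - 1) * (\<Omega> w * (a\<^sup>2) ^ w - \<Omega> w * 1 ^ w)
      - (B * (if ?\<nu> \<le> w then \<Omega> w * 1 ^ w else 0)
         + x0\<^sup>2 * (\<Omega> w * (c\<^sup>2) ^ w - (if ?\<nu> \<le> w then \<Omega> w * (c\<^sup>2) ^ w else 0))))
     sums (x0\<^sup>2 * gt P0 P1 e D ((a + L)\<^sup>2) g0 + M / (a\<^sup>2 - 1) * (gt P0 P1 e D (a\<^sup>2) g0 - gt P0 P1 e D 1 g0)
        - (B * ft P0 P1 e D ?\<nu> 1 g0 + x0\<^sup>2 * (gt P0 P1 e D (c\<^sup>2) g0 - ft P0 P1 e D ?\<nu> (c\<^sup>2) g0)))"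
    using lt c2_pos D_le_nu
    by (intro sums_add sums_diff sums_mult gt_sums[OF decay] ft_sums[OF decay]) auto
  moreover have "mean_cycle_cost w * \<Omega> w
      = x0\<^sup>2 * (\<Omega> w * ((a + L)\<^sup>2) ^ w) + M / (a\<^sup>2 - 1) * (\<Omega> w * (a\<^sup>2) ^ w - \<Omega> w * 1 ^ w)
        - (B * (if ?\<nu> \<le> w then \<Omega> w * 1 ^ w else 0)
           + x0\<^sup>2 * (\<Omega> w * (c\<^sup>2) ^ w - (if ?\<nu> \<le> w then \<Omega> w * (c\<^sup>2) ^ w else 0)))" for w
  proof (cases "D \<le> w")
    case False
    hence "\<Omega> w = 0" "\<not> ?\<nu> \<le> w" using D_le_nu[of D B c x0] by (auto simp: cycle_len_prob_def)
    thus ?thesis by simp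
  next
    case True
    have "c ^ (2 * w) = (c\<^sup>2) ^ w" by (simp add: power_mult)
    thus ?thesis
      unfolding mean_cycle_cost_def max_threshold_eq_if_nu_le[OF B_pos c2_pos c_bounds(2) True]
      by (simp add: algebra_simps diff_divide_distrib)
  qed
  ultimately show ?thesis by (simp add: mult.commute)
qed

lemma AE_cost_eq_suminf:
  "AE \<omega> in Pr. cost \<omega> = (\<Sum>w. cycle_cost a L c B x0 w (\<lambda>k. v k \<omega>) * indicator (first_rec w) \<omega>)"
  using AE_first_rec
proof (rule AE_mp, intro AE_I2 impI)
  fix \<omega> assume "\<exists>w. \<omega> \<in> first_rec w"
  then obtain w where w: "\<omega> \<in> first_rec w" by blast
  have "cost \<omega> = cycle_cost a L c B x0 w (\<lambda>k. v k \<omega>)"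
    using w by (intro hperf_next_rec_eq_cycle_cost) (auto simp: first_rec_def)
  also have "\<dots> = (\<Sum>w. cycle_cost a L c B x0 w (\<lambda>k. v k \<omega>) * indicator (first_rec w) \<omega>)"
    using sums_indicator_disjoint_family[OF disjoint_family_first_rec w] by (simp add: sums_iff)
  finally show "cost \<omega> = (\<Sum>w. cycle_cost a L c B x0 w (\<lambda>k. v k \<omega>) * indicator (first_rec w) \<omega>)" .
qed

lemma summable_norm_cycle_terms:
  "summable (\<lambda>w. norm (cycle_cost a L c B x0 w (\<lambda>k. v k \<omega>) * indicator (first_rec w) \<omega>))"
proof (cases "\<exists>w. \<omega> \<in> first_rec w")
  case True
  then obtain w where "\<omega> \<in> first_rec w" by blast
  from sums_indicator_disjoint_family[OF disjoint_family_first_rec this,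
      of "\<lambda>w. \<bar>cycle_cost a L c B x0 w (\<lambda>k. v k \<omega>)\<bar>"]
  show ?thesis by (auto simp: sums_iff abs_mult)
qed simp

lemma summable_integral_norm_cycle_terms:
  "summable (\<lambda>w. \<integral>\<omega>. norm (cycle_cost a L c B x0 w (\<lambda>k. v k \<omega>) * indicator (first_rec w) \<omega>) \<partial>Pr)"
proof (rule summable_comparison_test')
  obtain s C where decay: "mpow_decay (P1 ** diagm e) s C" and "a\<^sup>2 < s"
    by (rule mpow_decay_beyond_a2)
  hence "summable (\<lambda>w. \<Omega> w * (a\<^sup>2) ^ w)"
    using gt_sums[OF decay, of "a\<^sup>2"] by (auto simp: sums_iff)
  from summable_mult[OF this, of "2 * x0\<^sup>2 + M / (a\<^sup>2 - 1) + B"]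
  show "summable (\<lambda>w. (2 * x0\<^sup>2 + M / (a\<^sup>2 - 1) + B) * ((a\<^sup>2) ^ w * \<Omega> w))"
    by (simp add: mult_ac)
next
  fix w
  have [measurable]: "(\<lambda>s. \<bar>cycle_cost a L c B x0 w s\<bar>) \<in> borel_measurable (Pi\<^sub>M UNIV (\<lambda>_. borel))"
    by measurable
  have "(\<integral>\<omega>. norm (cycle_cost a L c B x0 w (\<lambda>k. v k \<omega>) * indicator (first_rec w) \<omega>) \<partial>Pr)
      = (\<integral>\<omega>. \<bar>cycle_cost a L c B x0 w (\<lambda>k. v k \<omega>)\<bar> * indicator (first_rec w) \<omega> \<partial>Pr)"
    by (simp add: abs_mult)
  also have "\<dots> = expectation (\<lambda>\<omega>. \<bar>cycle_cost a L c B x0 w (\<lambda>k. v k \<omega>)\<bar>) * \<Omega> w"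
    using integrable_cycle_cost by (intro noise_fun_times_first_rec) auto
  also have "\<dots> \<le> (2 * x0\<^sup>2 + M / (a\<^sup>2 - 1) + B) * ((a\<^sup>2) ^ w * \<Omega> w)"
    using expectation_abs_cycle_cost_le[of w] cycle_len_prob_nonneg[of w]
    by (simp add: mult.assoc[symmetric] mult_right_mono)
  finally show "norm (\<integral>\<omega>. norm (cycle_cost a L c B x0 w (\<lambda>k. v k \<omega>) * indicator (first_rec w) \<omega>) \<partial>Pr)
      \<le> (2 * x0\<^sup>2 + M / (a\<^sup>2 - 1) + B) * ((a\<^sup>2) ^ w * \<Omega> w)"
    by simp
qed

text \<open>Exchange of expectation and summation over the cycle length (dominated by
  \<open>\<Sum>\<^sub>w \<Omega>(w) a\<^sup>2\<^sup>w < \<infinity>\<close>).\<close>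

lemma integrable_cost: "integrable Pr cost"
  and expectation_cost_sums: "(\<lambda>w. mean_cycle_cost w * \<Omega> w) sums expectation cost"
proof -
  define f where "f w \<omega> = cycle_cost a L c B x0 w (\<lambda>k. v k \<omega>) * indicator (first_rec w) \<omega>" for w \<omega>
  have f: "integrable Pr (f w)" "integral\<^sup>L Pr (f w) = mean_cycle_cost w * \<Omega> w" for w
    using noise_fun_times_first_rec[OF cycle_cost_measurable integrable_cycle_cost, of w w]
      expectation_cycle_cost[of w]
    unfolding f_def by auto
  have AE_sum: "AE \<omega> in Pr. summable (\<lambda>w. norm (f w \<omega>))"
    by (intro AE_I2) (unfold f_def, rule summable_norm_cycle_terms)
  have sum_int: "summable (\<lambda>w. \<integral>\<omega>. norm (f w \<omega>) \<partial>Pr)"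
    unfolding f_def by (rule summable_integral_norm_cycle_terms)
  have int_suminf: "integrable Pr (\<lambda>\<omega>. \<Sum>w. f w \<omega>)"
    by (rule integrable_suminf[OF f(1) AE_sum sum_int])
  have cost_eq: "AE \<omega> in Pr. cost \<omega> = (\<Sum>w. f w \<omega>)"
    unfolding f_def by (rule AE_cost_eq_suminf)
  have suminf_measurable: "(\<lambda>\<omega>. \<Sum>w. f w \<omega>) \<in> borel_measurable Pr"
    using int_suminf by (rule borel_measurable_integrable)
  show "integrable Pr cost"
    using integrable_cong_AE[OF cost_measurable suminf_measurable cost_eq] int_suminf by simp
  have "expectation cost = (\<integral>\<omega>. (\<Sum>w. f w \<omega>) \<partial>Pr)"
    by (rule integral_cong_AE[OF cost_measurable suminf_measurable cost_eq])
  thus "(\<lambda>w. mean_cycle_cost w * \<Omega> w) sums expectation cost"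
    using sums_integral[OF f(1) AE_sum sum_int] unfolding f(2) by simp
qed

end


theorem mainTheorem2:
  fixes Pr :: "'a measure"
    and v :: "nat \<Rightarrow> 'a \<Rightarrow> real"
    and \<gamma> :: "nat \<Rightarrow> 'a \<Rightarrow> 'n::finite"
    and r :: "nat \<Rightarrow> 'a \<Rightarrow> bool"
    and a L c M B x0 :: real
    and P0 P1 :: "real^'n^'n" and e :: "real^'n"
    and D :: nat and g0 :: 'n
  assumes a_gt: "\<bar>a\<bar> > 1"
    and abar: "0 < (a + L)\<^sup>2" "(a + L)\<^sup>2 < 1"
    and c_bounds: "(a + L)\<^sup>2 < c\<^sup>2" "c\<^sup>2 < 1"
    and M_pos: "M > 0" and B_pos: "B > 0"
    and P0_st: "col_stochastic P0" and P1_st: "col_stochastic P1"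
    and e_range: "\<forall>i. 0 \<le> e $ i \<and> e $ i \<le> 1"
    and rho: "a\<^sup>2 * spec_radius (P1 ** diagm e) < 1"
    and D_pos: "0 < D"
    and ps: "prob_space Pr"
    and v_meas: "\<forall>k. v k \<in> borel_measurable Pr"
    and v_indep: "prob_space.indep_vars Pr (\<lambda>_. borel) v UNIV"
    and v_ident: "\<forall>k. distr Pr borel (v k) = distr Pr borel (v 0)"
    and v_sq_int: "integrable Pr (\<lambda>\<omega>. (v 0 \<omega>)\<^sup>2)"
    and v_mean: "prob_space.expectation Pr (v 0) = 0"
    and v_var: "prob_space.variance Pr (v 0) = M"
    and \<gamma>_meas: "\<forall>k. \<gamma> k \<in> measurable Pr (count_space UNIV)"
    and r_meas: "\<forall>k. r k \<in> measurable Pr (count_space UNIV)"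
    and chan_law: "\<forall>m gs rs. measure Pr {\<omega> \<in> space Pr. (\<forall>k\<le>m. \<gamma> k \<omega> = gs k) \<and> (\<forall>k\<in>{1..m}. r k \<omega> = rs k)}
                      = chan_prob P0 P1 e D g0 m gs rs"
    and noise_chan_indep:
      "prob_space.indep_set Pr
         (sets (vimage_algebra (space Pr) (\<lambda>\<omega> k. v k \<omega>) (Pi\<^sub>M UNIV (\<lambda>_. borel))))
         (sets (vimage_algebra (space Pr) (\<lambda>\<omega> k. (\<gamma> k \<omega>, r k \<omega>)) (Pi\<^sub>M UNIV (\<lambda>_. count_space UNIV))))"
  shows "integrable Pr (\<lambda>\<omega>. hperf a L c B x0 (\<lambda>k. v k \<omega>) (\<lambda>k. r k \<omega>) (next_rec (\<lambda>k. r k \<omega>)))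
    \<and> prob_space.expectation Pr
        (\<lambda>\<omega>. hperf a L c B x0 (\<lambda>k. v k \<omega>) (\<lambda>k. r k \<omega>) (next_rec (\<lambda>k. r k \<omega>)))
      = gt P0 P1 e D ((a + L)\<^sup>2) g0 * x0\<^sup>2
        + M / (a\<^sup>2 - 1) * (gt P0 P1 e D (a\<^sup>2) g0 - gt P0 P1 e D 1 g0)
        - (B * ft P0 P1 e D (nu D B c x0) 1 g0
           + x0\<^sup>2 * (gt P0 P1 e D (c\<^sup>2) g0 - ft P0 P1 e D (nu D B c x0) (c\<^sup>2) g0))"
proof -
  interpret cycle_model Pr v M \<gamma> r a L c B x0 P0 P1 e D g0
    by (intro cycle_model.intro iid_noise.intro iid_noise_axioms.intro cycle_model_axioms.intro)
       (fact assms)+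
  show ?thesis
    using integrable_cost sums_unique2[OF expectation_cost_sums mean_cycle_cost_sums] by simp
qed

end
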